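(* Let $\lambda$ be a Young diagram with $|\lambda|=n$ and Frobenius coordinates $(p_1>\dots>p_d\ge0\,|\,q_1>\dots>q_d\ge0)$, and let $\rho=(\rho_1,\dots,\rho_k)$ be a sequence of positive integers with $\rho_1+\dots+\rho_k=n$. Then $$\chi^\lambda_\rho=\sum_T\operatorname{sgn}T,$$ where the sum is over all filled structures $T$ with $k$ blocks whose cardinality is $(\rho_1,\dots,\rho_k)$ and whose fragments' filling p-numbers $\{P_1,\dots,P_d\}$ and filling q-numbers $\{Q_1,\dots,Q_d\}$ coincide, up to a permutation, with $\{p_1,\dots,p_d\}$ and $\{q_1,\dots,q_d\}$ respectively.
   Context: $\chi^\lambda_\rho$ denotes the value of the irreducible character $\chi^\lambda$ of $S_n$ at a permutation with cycle lengths $\rho_1,\dots,\rho_k$. Frobenius coordinates: $p_i=\lambda_i-i$, $q_i=\lambda'_i-i$ for $1\le i\le d$, $d$ the number of diagonal boxes. A filled structure with $k$ blocks consists of: a partition of $\{1,\dots,k\}$ into unordered nonempty classes called fragments; in each fragment the smallest element is a hook block and every other element is declared either a linear horizontal block or a linear vertical block; each linear block carries a positive integer value (its cardinality), and each hook block carries a pair $(p,q)$ of nonnegative integers (its cardinality being $p+q+1$). The cardinality of $T$ is the sequence of cardinalities of blocks $1,\dots,k$ in order. For a fragment, its filling p-number $P$ is $p$ of its hook block plus the sum of the values of its horizontal blocks, and its filling q-number $Q$ is $q$ of its hook block plus the sum of the values of its vertical blocks. Let $\upsilon(T)$ be the number of vertical blocks in $T$. Numbering the fragments $1,\dots,d$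 arbitrarily with p/q-numbers $(P_i,Q_i)$, $\operatorname{sgn}T=\operatorname{sgn}\big(\prod_{i<j}(P_i-P_j)(Q_i-Q_j)\big)(-1)^{\sum_jQ_j+\upsilon(T)}$ (independent of the numbering; $\operatorname{sgn}0=0$). *)

theory Defs
  imports Main "HOL-Library.FuncSet" "HOL-Library.Multiset" "HOL-Combinatorics.Permutations"
begin

text \<open>A Young diagram is the list of its (positive) row lengths, weakly decreasing.
  Rows are 0-indexed in the list: lam!i is the paper's lambda_(i+1).\<close>

definition young_diagram :: "nat list \<Rightarrow> bool" where
  "young_diagram lam \<longleftrightarrow> sorted (rev lam) \<and> (\<forall>x\<in>set lam. 0 < x)"

definition conj_len :: "nat list \<Rightarrow> nat \<Rightarrow> nat" where
  "conj_len lam j = length (filter (\<lambda>x. j \<le> x) lam)"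

definition diag :: "nat list \<Rightarrow> nat" where
  "diag lam = card {i. i < length lam \<and> Suc i \<le> lam ! i}"

definition frob_p :: "nat list \<Rightarrow> nat list" where
  "frob_p lam = map (\<lambda>i. lam ! i - Suc i) [0..<diag lam]"

definition frob_q :: "nat list \<Rightarrow> nat list" where
  "frob_q lam = map (\<lambda>i. conj_len lam (Suc i) - Suc i) [0..<diag lam]"

text \<open>chi^lambda_rho is the coefficient of x^(lambda+delta) in a_delta * p_rho
  in l = length lam variables, delta = (l-1,...,1,0), a_delta the Vandermonde
  alternant and p_rho the product of power sums.  Expanded: sum over the choice
  f of the variable picked from each power-sum factor and over the permutation
  sigma picking the term of the alternant.\<close>

definition sn_char :: "nat list \<Rightarrow> nat list \<Rightarrow> int" where
  "sn_char lam rho =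
    (let l = length lam; k = length rho in
     \<Sum>f \<in> {0..<k} \<rightarrow>\<^sub>E {0..<l}. \<Sum>\<sigma> \<in> {\<sigma>. \<sigma> permutes {0..<l}}.
        (if (\<forall>j<l. lam ! j + (l - 1 - j) = (l - 1 - \<sigma> j) + (\<Sum>i\<in>{i. i < k \<and> f i = j}. rho ! i))
         then sign \<sigma> else 0))"

text \<open>Blocks 1..k of the paper are the list positions 0..k-1.\<close>
datatype block = Hook nat nat | Hor nat | Ver nat

fun bcard :: "block \<Rightarrow> nat" where
  "bcard (Hook p q) = p + q + 1"
| "bcard (Hor v) = v"
| "bcard (Ver v) = v"

fun is_hook :: "block \<Rightarrow> bool" where
  "is_hook (Hook _ _) = True"
| "is_hook _ = False"

fun is_ver :: "block \<Rightarrow> bool" where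
  "is_ver (Ver _) = True"
| "is_ver _ = False"

fun hook_p :: "block \<Rightarrow> nat" where
  "hook_p (Hook p _) = p"
| "hook_p _ = 0"

fun hook_q :: "block \<Rightarrow> nat" where
  "hook_q (Hook _ q) = q"
| "hook_q _ = 0"

fun hor_val :: "block \<Rightarrow> nat" where
  "hor_val (Hor v) = v"
| "hor_val _ = 0"

fun ver_val :: "block \<Rightarrow> nat" where
  "ver_val (Ver v) = v"
| "ver_val _ = 0"

text \<open>A filled structure is a pair (r, b): r!i is the smallest element of the
  fragment of block i (so the fragments are the fibres of r and their minima
  are the fixed points of r), and b!i is the filled block i.\<close>
type_synonym fstruct = "nat list \<times> block list"

definition filled_structure :: "nat \<Rightarrow> fstruct \<Rightarrow> bool" where
  "filled_structure k T \<longleftrightarrow>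
     (case T of (r, b) \<Rightarrow>
        length r = k \<and> length b = k \<and>
        (\<forall>i<k. r ! i \<le> i \<and> r ! (r ! i) = r ! i \<and>
               (r ! i = i \<longleftrightarrow> is_hook (b ! i)) \<and>
               b ! i \<noteq> Hor 0 \<and> b ! i \<noteq> Ver 0))"

definition hooks :: "fstruct \<Rightarrow> nat set" where
  "hooks T = {h. h < length (fst T) \<and> fst T ! h = h}"

definition fragment :: "fstruct \<Rightarrow> nat \<Rightarrow> nat set" where
  "fragment T h = {i. i < length (fst T) \<and> fst T ! i = h}"

definition fillP :: "fstruct \<Rightarrow> nat \<Rightarrow> nat" where
  "fillP T h = hook_p (snd T ! h) + (\<Sum>i\<in>fragment T h. hor_val (snd T ! i))"

definition fillQ :: "fstruct \<Rightarrow> nat \<Rightarrow> nat" where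
  "fillQ T h = hook_q (snd T ! h) + (\<Sum>i\<in>fragment T h. ver_val (snd T ! i))"

definition n_vertical :: "fstruct \<Rightarrow> nat" where
  "n_vertical T = card {i. i < length (snd T) \<and> is_ver (snd T ! i)}"

text \<open>Fragments are numbered by the increasing order of their hook blocks.\<close>
definition sgnT :: "fstruct \<Rightarrow> int" where
  "sgnT T =
     sgn (\<Prod>h\<in>hooks T. \<Prod>h'\<in>{h'\<in>hooks T. h < h'}.
            (int (fillP T h) - int (fillP T h')) * (int (fillQ T h) - int (fillQ T h')))
     * (-1) ^ ((\<Sum>h\<in>hooks T. fillQ T h) + n_vertical T)"

end

theory Submission
  imports Defs "HOL-Library.Disjoint_Sets"
begin

text \<open>Let \<open>l\<close> be the number of rows of \<open>lam\<close> and \<open>beta_j = lam_j + l - 1 - j\<close> its beta-numbers.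
  By the Frobenius formula, \<open>chi^lam_rho\<close> is the coefficient of \<open>x^beta\<close> in
  \<open>a_delta * p_(rho_1) * ... * p_(rho_k)\<close>. Expanding the power sums one at a time and re-sorting
  the exponents gives the Murnaghan--Nakayama rule on the beta-set \<open>C = {beta_j}\<close>: the factor
  \<open>p_m\<close> moves a bead \<open>c \<in> C\<close> to a free position \<open>c - m\<close>, with sign \<open>(-1)^k\<close> for the \<open>k\<close>
  beads jumped over. In Frobenius coordinates (arms: beads \<open>\<ge> l\<close>, shifted by \<open>l\<close>; legs: free
  positions \<open>< l\<close>, reflected) such a move shortens an arm by \<open>m\<close>, lengthens a leg by \<open>m\<close>, or,
  when it crosses \<open>l\<close>, removes an arm \<open>p\<close> and a leg \<open>q\<close> with \<open>p + q + 1 = m\<close>.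

  The signed count of filled structures satisfies the same recursion in the last block: a
  horizontal (vertical) block of size \<open>m\<close> raises one P-number (Q-number) by \<open>m\<close>, and a hook
  block opens a new fragment with \<open>P + Q + 1 = m\<close>. Structures whose raised number collides with
  that of another fragment cancel in pairs, by moving the last block to the other fragment; the
  remaining ones correspond to the bead moves, with the same signs.\<close>

section \<open>Alternant times power sums\<close>

text \<open>\<open>alt_psum_coeff l v ms\<close> is the coefficient of \<open>x^v\<close> in
  \<open>a_delta * p_(ms!0) * p_(ms!1) * ...\<close> in \<open>l\<close> variables: taking \<open>x_j^m\<close> from the
  factor \<open>p_m\<close> lowers the remaining exponent \<open>v j\<close> by \<open>m\<close>.\<close>

fun alt_psum_coeff :: "nat \<Rightarrow> (nat \<Rightarrow> nat) \<Rightarrow> nat list \<Rightarrow> int" where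
  "alt_psum_coeff l v [] =
     (\<Sum>\<sigma>\<in>{\<sigma>. \<sigma> permutes {0..<l}}. if \<forall>j<l. v j = l - 1 - \<sigma> j then sign \<sigma> else 0)"
| "alt_psum_coeff l v (m # ms) =
     (\<Sum>j<l. if m \<le> v j then alt_psum_coeff l (v(j := v j - m)) ms else 0)"

lemma alt_psum_coeff_cong:
  "(\<And>j. j < l \<Longrightarrow> v j = v' j) \<Longrightarrow> alt_psum_coeff l v ms = alt_psum_coeff l v' ms"
proof (induction ms arbitrary: v v')
  case (Cons m ms)
  have "alt_psum_coeff l (v(j := v j - m)) ms = alt_psum_coeff l (v'(j := v' j - m)) ms"
    if "j < l" for j
    by (rule Cons.IH) (use Cons.prems that in auto)
  then show ?case using Cons.prems by (auto intro!: sum.cong)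
qed simp

lemma alt_psum_coeff_Nil_permute:
  assumes \<tau>: "\<tau> permutes {0..<l}"
  shows "alt_psum_coeff l (v \<circ> \<tau>) [] = sign \<tau> * alt_psum_coeff l v []"
proof -
  have cond: "(\<forall>j<l. v (\<tau> j) = l - 1 - \<sigma> (\<tau> j)) \<longleftrightarrow> (\<forall>j<l. v j = l - 1 - \<sigma> j)" for \<sigma>
  proof
    assume h: "\<forall>j<l. v (\<tau> j) = l - 1 - \<sigma> (\<tau> j)"
    show "\<forall>j<l. v j = l - 1 - \<sigma> j"
    proof (intro allI impI)
      fix j assume "j < l"
      then have "inv \<tau> j < l"
        using permutes_in_image[OF permutes_inv[OF \<tau>]] by simp
      then show "v j = l - 1 - \<sigma> j"
        using h permutes_inverses(1)[OF \<tau>] by metis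
    qed
  next
    assume "\<forall>j<l. v j = l - 1 - \<sigma> j"
    then show "\<forall>j<l. v (\<tau> j) = l - 1 - \<sigma> (\<tau> j)"
      using permutes_in_image[OF \<tau>] by simp
  qed
  have "alt_psum_coeff l (v \<circ> \<tau>) [] = (\<Sum>\<sigma>\<in>{\<sigma>. \<sigma> permutes {0..<l}}.
      if \<forall>j<l. v (\<tau> j) = l - 1 - (\<sigma> \<circ> \<tau>) j then sign (\<sigma> \<circ> \<tau>) else 0)"
    unfolding alt_psum_coeff.simps comp_apply[of v \<tau>]
    by (rule sum_permutations_compose_right[OF \<tau>])
  also have "\<dots> = (\<Sum>\<sigma>\<in>{\<sigma>. \<sigma> permutes {0..<l}}.
      sign \<tau> * (if \<forall>j<l. v j = l - 1 - \<sigma> j then sign \<sigma> else 0))"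
  proof (rule sum.cong[OF refl])
    fix \<sigma> assume "\<sigma> \<in> {\<sigma>. \<sigma> permutes {0..<l}}"
    then have "sign (\<sigma> \<circ> \<tau>) = sign \<tau> * sign \<sigma>"
      using sign_compose[OF permutes_imp_permutation[OF finite_atLeastLessThan]
          permutes_imp_permutation[OF finite_atLeastLessThan \<tau>]]
      by (simp add: mult.commute)
    then show "(if \<forall>j<l. v (\<tau> j) = l - 1 - (\<sigma> \<circ> \<tau>) j then sign (\<sigma> \<circ> \<tau>) else 0) =
        sign \<tau> * (if \<forall>j<l. v j = l - 1 - \<sigma> j then sign \<sigma> else 0)"
      by (simp only: comp_apply cond) simp
  qed
  finally show ?thesis by (simp add: sum_distrib_left)
qed

lemma alt_psum_coeff_permute:
  assumes \<tau>: "\<tau> permutes {0..<l}"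
  shows "alt_psum_coeff l (v \<circ> \<tau>) ms = sign \<tau> * alt_psum_coeff l v ms"
proof (induction ms arbitrary: v)
  case Nil
  show ?case by (rule alt_psum_coeff_Nil_permute[OF \<tau>])
next
  case (Cons m ms)
  have bij: "bij_betw \<tau> {..<l} {..<l}"
    using permutes_imp_bij[OF \<tau>] by (simp add: atLeast0LessThan)
  have upd: "(v \<circ> \<tau>)(j := (v \<circ> \<tau>) j - m) = v(\<tau> j := v (\<tau> j) - m) \<circ> \<tau>" for j
    using permutes_inj[OF \<tau>] by (auto simp: fun_eq_iff inj_eq)
  have step: "alt_psum_coeff l ((v \<circ> \<tau>)(j := (v \<circ> \<tau>) j - m)) ms =
      sign \<tau> * alt_psum_coeff l (v(\<tau> j := v (\<tau> j) - m)) ms" for j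
    unfolding upd by (rule Cons.IH)
  have "alt_psum_coeff l (v \<circ> \<tau>) (m # ms) =
      (\<Sum>j<l. sign \<tau> * (if m \<le> v (\<tau> j) then alt_psum_coeff l (v(\<tau> j := v (\<tau> j) - m)) ms else 0))"
    unfolding alt_psum_coeff.simps step by (intro sum.cong refl) simp
  also have "\<dots> = sign \<tau> * alt_psum_coeff l v (m # ms)"
    by (simp add: sum_distrib_left[symmetric]
        sum.reindex_bij_betw[OF bij, of "\<lambda>j. if m \<le> v j then alt_psum_coeff l (v(j := v j - m)) ms else 0"])
  finally show ?case .
qed

lemma alt_psum_coeff_eq_0_if_repeated:
  assumes "j < l" "j' < l" "j \<noteq> j'" "v j = v j'"
  shows "alt_psum_coeff l v ms = 0"
proof -
  have \<tau>: "transpose j j' permutes {0..<l}"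
    using assms by (intro permutes_swap_id) auto
  have "alt_psum_coeff l (v \<circ> transpose j j') ms = alt_psum_coeff l v ms"
    by (rule alt_psum_coeff_cong) (use assms in \<open>auto simp: transpose_def\<close>)
  moreover have "alt_psum_coeff l (v \<circ> transpose j j') ms = - alt_psum_coeff l v ms"
    using alt_psum_coeff_permute[OF \<tau>] assms by (simp add: sign_swap_id)
  ultimately show ?thesis by simp
qed

definition frobenius_sum :: "nat \<Rightarrow> (nat \<Rightarrow> nat) \<Rightarrow> nat list \<Rightarrow> int" where
  "frobenius_sum l v rho =
     (\<Sum>f \<in> {0..<length rho} \<rightarrow>\<^sub>E {0..<l}. \<Sum>\<sigma> \<in> {\<sigma>. \<sigma> permutes {0..<l}}.
        (if \<forall>j<l. v j = (l - 1 - \<sigma> j) + (\<Sum>i\<in>{i. i < length rho \<and> f i = j}. rho ! i)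
         then sign \<sigma> else 0))"

lemma sum_PiE_insert:
  assumes "x \<notin> S"
  shows "(\<Sum>f \<in> Pi\<^sub>E (insert x S) T. F f) = (\<Sum>y\<in>T x. \<Sum>g \<in> Pi\<^sub>E S T. F (g(x := y)))"
proof -
  have "(\<Sum>f \<in> Pi\<^sub>E (insert x S) T. F f) = (\<Sum>(y, g) \<in> T x \<times> Pi\<^sub>E S T. F (g(x := y)))"
    unfolding PiE_insert_eq by (subst sum.reindex[OF inj_combinator[OF assms]]) (simp add: case_prod_unfold)
  then show ?thesis by (simp add: sum.cartesian_product)
qed

lemma sum_nth_snoc_fun_upd:
  "(\<Sum>i\<in>{i. i < Suc (length rho) \<and> (g(length rho := y)) i = j}. (rho @ [m]) ! i) =
    (\<Sum>i\<in>{i. i < length rho \<and> g i = j}. rho ! i) + (if y = j then m else 0)"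
proof -
  define I where "I = {i. i < length rho \<and> g i = j}"
  have "{i. i < Suc (length rho) \<and> (g(length rho := y)) i = j} = (if y = j then insert (length rho) I else I)"
    by (auto simp: I_def)
  moreover have "(\<Sum>i\<in>I. (rho @ [m]) ! i) = (\<Sum>i\<in>I. rho ! i)"
    by (rule sum.cong) (auto simp: I_def nth_append)
  moreover have "finite I" "length rho \<notin> I" by (auto simp: I_def)
  ultimately show ?thesis by (simp add: I_def[symmetric] add.commute)
qed

lemma frobenius_sum_snoc:
  "frobenius_sum l v (rho @ [m]) =
     (\<Sum>y<l. if m \<le> v y then frobenius_sum l (v(y := v y - m)) rho else 0)"
proof -
  define k where "k = length rho"
  define load :: "(nat \<Rightarrow> nat) \<Rightarrow> nat \<Rightarrow> nat" where "load g j = (\<Sum>i\<in>{i. i < k \<and> g i = j}. rho ! i)" for g j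
  define alt :: "(nat \<Rightarrow> nat) \<Rightarrow> (nat \<Rightarrow> nat) \<Rightarrow> int" where "alt w g = (\<Sum>\<sigma>\<in>{\<sigma>. \<sigma> permutes {0..<l}}.
      if \<forall>j<l. w j = l - 1 - \<sigma> j + load g j then sign \<sigma> else 0)" for w g
  have load_upd: "(\<Sum>i\<in>{i. i < Suc k \<and> (g(k := y)) i = j}. (rho @ [m]) ! i) =
      load g j + (if y = j then m else 0)" for g y j
    unfolding load_def k_def by (rule sum_nth_snoc_fun_upd)
  have lower: "(\<forall>j<l. v j = l - 1 - \<sigma> j + (load g j + (if y = j then m else 0))) \<longleftrightarrow>
      m \<le> v y \<and> (\<forall>j<l. (v(y := v y - m)) j = l - 1 - \<sigma> j + load g j)" if "y < l" for g y \<sigma>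
    using that by (auto simp: le_diff_conv)
  have "frobenius_sum l v (rho @ [m]) =
      (\<Sum>y\<in>{0..<l}. \<Sum>g \<in> {0..<k} \<rightarrow>\<^sub>E {0..<l}. if m \<le> v y then alt (v(y := v y - m)) g else 0)"
  proof -
    have ins: "{0..<Suc k} = insert k {0..<k}" by auto
    have k: "k \<notin> {0..<k}" by simp
    have "frobenius_sum l v (rho @ [m]) = (\<Sum>y\<in>{0..<l}. \<Sum>g \<in> {0..<k} \<rightarrow>\<^sub>E {0..<l}.
        \<Sum>\<sigma>\<in>{\<sigma>. \<sigma> permutes {0..<l}}. if \<forall>j<l. v j = l - 1 - \<sigma> j +
          (load g j + (if y = j then m else 0)) then sign \<sigma> else 0)"
      unfolding frobenius_sum_def length_append_singleton k_def[symmetric] ins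
      by (simp only: sum_PiE_insert[of k "{0..<k}", OF k] load_upd)
    also have "\<dots> = (\<Sum>y\<in>{0..<l}. \<Sum>g \<in> {0..<k} \<rightarrow>\<^sub>E {0..<l}.
        if m \<le> v y then alt (v(y := v y - m)) g else 0)"
    proof (intro sum.cong refl)
      fix y g assume "y \<in> {0..<l}"
      then have y: "y < l" by simp
      show "(\<Sum>\<sigma>\<in>{\<sigma>. \<sigma> permutes {0..<l}}. if \<forall>j<l. v j = l - 1 - \<sigma> j +
          (load g j + (if y = j then m else 0)) then sign \<sigma> else 0) =
          (if m \<le> v y then alt (v(y := v y - m)) g else 0)"
        unfolding alt_def lower[OF y] by (cases "m \<le> v y") simp_all
    qed
    finally show ?thesis .
  qed
  also have "\<dots> = (\<Sum>y<l. if m \<le> v y then frobenius_sum l (v(y := v y - m)) rho else 0)"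
    by (intro sum.cong) (auto simp: frobenius_sum_def alt_def load_def k_def)
  finally show ?thesis .
qed

lemma frobenius_sum_eq_alt_psum_coeff: "frobenius_sum l v rho = alt_psum_coeff l v (rev rho)"
proof (induction rho arbitrary: v rule: rev_induct)
  case Nil
  then show ?case by (simp add: frobenius_sum_def)
next
  case (snoc m rho)
  show ?case
    by (simp only: frobenius_sum_snoc snoc.IH rev_append rev.simps append.simps alt_psum_coeff.simps)
qed

section \<open>The Murnaghan--Nakayama recursion on beta-sets\<close>

lemma strict_antimono_on_SucI:
  fixes v :: "nat \<Rightarrow> 'a::order"
  assumes "\<And>i. Suc i < l \<Longrightarrow> v (Suc i) < v i"
  shows "strict_antimono_on {0..<l} v"
proof (rule monotone_onI)
  fix i i' assume "i \<in> {0..<l}" "i' \<in> {0..<l}" "i < i'"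
  then show "v i' < v i"
  proof (induction i' rule: less_induct)
    case (less i')
    then obtain i'' where i'': "i' = Suc i''" by (cases i') auto
    then have "v i' < v i''" using assms less.prems by simp
    moreover have "v i'' \<le> v i"
      using less.IH[of i''] less.prems i'' by (cases "i = i''") auto
    ultimately show ?case by simp
  qed
qed

lemma strict_antimono_on_imp_inj_on:
  fixes v :: "'a::linorder \<Rightarrow> 'b::order"
  shows "strict_antimono_on S v \<Longrightarrow> inj_on v S"
  by (simp add: strict_antimono_iff_antimono)

lemma strict_antimono_on_gap:
  fixes v :: "nat \<Rightarrow> nat"
  assumes "strict_antimono_on {0..<l} v" "i \<le> i'" "i' < l"
  shows "v i' + (i' - i) \<le> v i"
  using assms(2,3)
proof (induction i' rule: dec_induct)
  case (step i')
  have "v (Suc i') < v i'" using monotone_onD[OF assms(1)] step.prems by simp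
  then show ?case using step by simp
qed simp

lemma strict_antimono_on_less_iff:
  fixes v :: "nat \<Rightarrow> 'a::linorder"
  assumes "strict_antimono_on {0..<l} v" "a < l" "b < l"
  shows "v b < v a \<longleftrightarrow> a < b"
  using monotone_onD[OF assms(1)] assms(2,3)
  by (metis atLeastLessThan_iff linorder_neqE_nat order.asym zero_le)

lemma strict_antimono_on_staircase:
  fixes v :: "nat \<Rightarrow> nat"
  assumes v: "strict_antimono_on {0..<l} v" and small: "\<And>j. j < l \<Longrightarrow> v j < l" and j: "j < l"
  shows "v j = l - 1 - j"
proof -
  have "v j + j \<le> v 0" using strict_antimono_on_gap[OF v, of 0 j] j by simp
  moreover have "v (l - 1) + (l - 1 - j) \<le> v j" using strict_antimono_on_gap[OF v, of j "l - 1"] j by simp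
  ultimately show ?thesis using small[of 0] j by linarith
qed

lemma down_closed_eq_lessThan:
  fixes S :: "nat set"
  assumes "\<And>i i'. i \<le> i' \<Longrightarrow> i' \<in> S \<Longrightarrow> i \<in> S" "finite S"
  shows "S = {..<card S}"
proof (cases "S = {}")
  case False
  then have "Max S \<in> S" using assms(2) by simp
  then have "S = {..Max S}"
    using assms by (auto intro: Max_ge)
  then have "S = {..<Suc (Max S)}" by (simp add: lessThan_Suc_atMost)
  then show ?thesis by (metis card_lessThan)
qed simp

definition block_rotation :: "nat \<Rightarrow> nat \<Rightarrow> nat \<Rightarrow> nat" where
  "block_rotation j r i = (if j \<le> i \<and> i < j + r then i + 1 else if i = j + r then j else i)"

lemma block_rotation_Suc:
  "block_rotation j (Suc r) = block_rotation j r \<circ> transpose (j + r) (j + r + 1)"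
  by (auto simp: block_rotation_def fun_eq_iff transpose_def)

lemma block_rotation_permutes: "j + r < l \<Longrightarrow> block_rotation j r permutes {0..<l}"
proof (induction r)
  case 0
  have "block_rotation j 0 = id" by (auto simp: block_rotation_def fun_eq_iff)
  then show ?case by (simp only: permutes_id)
next
  case (Suc r)
  have "transpose (j + r) (j + r + 1) permutes {0..<l}"
    using Suc.prems by (intro permutes_swap_id) auto
  then show ?case using Suc unfolding block_rotation_Suc by (intro permutes_compose) auto
qed

lemma sign_block_rotation: "sign (block_rotation j r) = (-1) ^ r"
proof (induction r)
  case 0
  have "block_rotation j 0 = id" by (auto simp: block_rotation_def fun_eq_iff)
  then show ?case by simp
next
  case (Suc r)
  have "permutation (block_rotation j r)"
    using block_rotation_permutes[of j r "j + r + 1"] by (auto intro: permutes_imp_permutation)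
  then have "sign (block_rotation j (Suc r)) =
      sign (block_rotation j r) * sign (transpose (j + r) (j + r + 1))"
    unfolding block_rotation_Suc by (rule sign_compose[OF _ permutation_swap_id])
  then show ?case by (simp add: sign_swap_id Suc.IH)
qed

lemma strict_antimono_on_threshold:
  fixes v :: "nat \<Rightarrow> nat"
  assumes v: "strict_antimono_on {0..<l} v" and x: "x \<notin> v ` {0..<l}"
  obtains n where "n \<le> l" "\<And>i. i < n \<Longrightarrow> x < v i" "\<And>i. n \<le> i \<Longrightarrow> i < l \<Longrightarrow> v i < x"
proof
  define S where "S = {i. i < l \<and> x < v i}"
  have mono: "v i' \<le> v i" if "i \<le> i'" "i' < l" for i i'
    using strict_antimono_on_gap[OF v that] by simp
  have S_eq: "S = {..<card S}"
    by (rule down_closed_eq_lessThan) (use mono in \<open>auto simp: S_def intro: less_le_trans\<close>)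
  have S: "i < l \<and> x < v i \<longleftrightarrow> i < card S" for i
  proof -
    have "i \<in> S \<longleftrightarrow> i < card S" by (subst S_eq) simp
    then show ?thesis by (simp add: S_def)
  qed
  have "S \<subseteq> {..<l}" by (auto simp: S_def)
  then show "card S \<le> l" using card_mono[OF finite_lessThan, of S l] by simp
  show "x < v i" if "i < card S" for i using S[of i] that by blast
  show "v i < x" if "card S \<le> i" "i < l" for i
  proof -
    have "v i \<in> v ` {0..<l}" using that(2) by simp
    then have "v i \<noteq> x" using x by blast
    moreover have "\<not> x < v i" using S[of i] that by simp
    ultimately show ?thesis by simp
  qed
qed

text \<open>If the strictly decreasing \<open>v\<close> drops below \<open>x\<close> exactly at position \<open>n\<close>, then lowering
  \<open>v j\<close> to \<open>x\<close> and rotating positions \<open>j, ..., n - 1\<close> restores strict decrease; the values jumped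
  over are \<open>v (j + 1), ..., v (n - 1)\<close>.\<close>

context
  fixes l n j x :: nat and v :: "nat \<Rightarrow> nat"
  assumes v: "strict_antimono_on {0..<l} v" and jn: "j < n" and nl: "n \<le> l"
    and above: "\<And>i. i < n \<Longrightarrow> x < v i" and below: "\<And>i. n \<le> i \<Longrightarrow> i < l \<Longrightarrow> v i < x"
begin

lemma strict_antimono_on_rotation:
  "strict_antimono_on {0..<l} (v(j := x) \<circ> block_rotation j (n - 1 - j))"
proof -
  define r where "r = n - 1 - j"
  define w where "w = v(j := x) \<circ> block_rotation j r"
  have w: "w i = (if j \<le> i \<and> i < j + r then v (i + 1) else if i = j + r then x else v i)" for i
    by (auto simp: w_def block_rotation_def)
  have d: "v b < v a" if "a < b" "b < l" for a b
    using monotone_onD[OF v] that by simp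
  have "w (Suc i) < w i" if il: "Suc i < l" for i
  proof -
    consider "Suc i < j" | "Suc i = j" | "j \<le> i \<and> Suc i < j + r" | "Suc i = j + r"
      | "i = j + r" | "j + r < i"
      by linarith
    then show ?thesis
    proof cases
      case 2
      then show ?thesis using above[of i] d[of i "Suc j"] jn nl r_def by (cases "r = 0") (auto simp: w)
    next
      case 3
      then show ?thesis using d[of "Suc i" "Suc (Suc i)"] r_def jn nl by (auto simp: w)
    next
      case 4
      then show ?thesis using above[of i] above[of "Suc i"] r_def jn by (auto simp: w)
    next
      case 5
      then show ?thesis using below[of "Suc i"] r_def jn il by (auto simp: w)
    qed (use d il in \<open>auto simp: w\<close>)
  qed
  then show ?thesis unfolding w_def r_def by (rule strict_antimono_on_SucI)
qed

lemma card_between_rotation: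
  "card {y \<in> v ` {0..<l}. x < y \<and> y < v j} = n - 1 - j"
proof -
  have d: "v b < v a \<longleftrightarrow> a < b" if "a < l" "b < l" for a b
    using strict_antimono_on_less_iff[OF v that] .
  have "{y \<in> v ` {0..<l}. x < y \<and> y < v j} = v ` {j<..<n}"
  proof
    show "{y \<in> v ` {0..<l}. x < y \<and> y < v j} \<subseteq> v ` {j<..<n}"
      using above below d jn nl by (force simp: not_less[symmetric])
    show "v ` {j<..<n} \<subseteq> {y \<in> v ` {0..<l}. x < y \<and> y < v j}"
      using above d nl by auto
  qed
  moreover have "inj_on v {j<..<n}"
    using nl by (intro inj_on_subset[OF strict_antimono_on_imp_inj_on[OF v]]) auto
  ultimately show ?thesis by (simp add: card_image)
qed

end

text \<open>The function \<open>F\<close> below stands for the induction hypothesis: on strictly decreasing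
  exponent vectors the coefficient only depends on the set of exponents.\<close>

lemma alt_psum_coeff_lower_one:
  assumes v: "strict_antimono_on {0..<l} v" and jl: "j < l" and mj: "m \<le> v j" and m0: "0 < m"
    and F: "\<And>w. strict_antimono_on {0..<l} w \<Longrightarrow> alt_psum_coeff l w ms = F (w ` {0..<l})"
  shows "alt_psum_coeff l (v(j := v j - m)) ms =
    (if v j - m \<in> v ` {0..<l} then 0 else
      (-1) ^ card {y \<in> v ` {0..<l}. v j - m < y \<and> y < v j} * F (insert (v j - m) (v ` {0..<l} - {v j})))"
proof (cases "v j - m \<in> v ` {0..<l}")
  case True
  then obtain j' where j': "j' < l" "v j' = v j - m" by auto
  then have "j' \<noteq> j" using m0 mj by auto
  then show ?thesis
    using alt_psum_coeff_eq_0_if_repeated[of j l j' "v(j := v j - m)"] jl j' True by auto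
next
  case False
  define x where "x = v j - m"
  obtain n where nl: "n \<le> l" and above: "\<And>i. i < n \<Longrightarrow> x < v i"
    and below: "\<And>i. n \<le> i \<Longrightarrow> i < l \<Longrightarrow> v i < x"
    using strict_antimono_on_threshold[OF v False[folded x_def]] by blast
  have jn: "j < n"
  proof (rule ccontr)
    assume "\<not> j < n"
    then have "v j < x" using below jl by simp
    then show False by (simp add: x_def)
  qed
  define \<tau> where "\<tau> = block_rotation j (n - 1 - j)"
  have \<tau>: "\<tau> permutes {0..<l}" unfolding \<tau>_def using jn nl by (intro block_rotation_permutes) simp
  have image: "(v(j := x) \<circ> \<tau>) ` {0..<l} = insert x (v ` {0..<l} - {v j})"
  proof -
    have "(v(j := x) \<circ> \<tau>) ` {0..<l} = (v(j := x)) ` {0..<l}"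
      unfolding image_comp[symmetric] permutes_image[OF \<tau>] ..
    also have "\<dots> = insert x (v ` ({0..<l} - {j}))" using jl by auto
    also have "v ` ({0..<l} - {j}) = v ` {0..<l} - {v j}"
      using inj_on_image_set_diff[OF strict_antimono_on_imp_inj_on[OF v], of "{0..<l}" "{j}"] jl by simp
    finally show ?thesis .
  qed
  have "alt_psum_coeff l (v(j := x)) ms = sign \<tau> * alt_psum_coeff l (v(j := x) \<circ> \<tau>) ms"
    using alt_psum_coeff_permute[OF \<tau>, of "v(j := x)" ms] by (simp add: mult.assoc[symmetric])
  also have "\<dots> = (-1) ^ (n - 1 - j) * F (insert x (v ` {0..<l} - {v j}))"
    using F[OF strict_antimono_on_rotation[OF v jn nl above below]] image
    by (simp add: \<tau>_def sign_block_rotation)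
  finally show ?thesis
    using False card_between_rotation[OF v jn nl above below] by (simp add: x_def)
qed

lemma alt_psum_coeff_Cons_strict_antimono:
  assumes v: "strict_antimono_on {0..<l} v" and m0: "0 < m"
    and F: "\<And>w. strict_antimono_on {0..<l} w \<Longrightarrow> alt_psum_coeff l w ms = F (w ` {0..<l})"
  shows "alt_psum_coeff l v (m # ms) =
    (\<Sum>c\<in>{c \<in> v ` {0..<l}. m \<le> c \<and> c - m \<notin> v ` {0..<l}}.
      (-1) ^ card {y \<in> v ` {0..<l}. c - m < y \<and> y < c} * F (insert (c - m) (v ` {0..<l} - {c})))"
proof -
  define C where "C = v ` {0..<l}"
  define g where "g c = (if m \<le> c \<and> c - m \<notin> C then
      (-1) ^ card {y \<in> C. c - m < y \<and> y < c} * F (insert (c - m) (C - {c})) else 0)" for c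
  have "alt_psum_coeff l v (m # ms) = (\<Sum>j<l. g (v j))"
    unfolding alt_psum_coeff.simps
    by (intro sum.cong refl) (simp add: g_def C_def alt_psum_coeff_lower_one[OF v _ _ m0 F])
  also have "\<dots> = sum g C"
    using strict_antimono_on_imp_inj_on[OF v]
    by (simp add: C_def sum.reindex atLeast0LessThan)
  also have "\<dots> = (\<Sum>c\<in>{c \<in> C. m \<le> c \<and> c - m \<notin> C}.
      (-1) ^ card {y \<in> C. c - m < y \<and> y < c} * F (insert (c - m) (C - {c})))"
    unfolding g_def by (rule sum.inter_filter[symmetric]) (simp add: C_def)
  finally show ?thesis unfolding C_def .
qed

lemma alt_psum_coeff_Nil_strict_antimono:
  assumes v: "strict_antimono_on {0..<l} v"
  shows "alt_psum_coeff l v [] = (if \<forall>j<l. v j = l - 1 - j then 1 else 0)"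
proof -
  have staircase: "(\<forall>j<l. v j = l - 1 - \<sigma> j) \<longleftrightarrow> \<sigma> = id \<and> (\<forall>j<l. v j = l - 1 - j)"
    if \<sigma>: "\<sigma> permutes {0..<l}" for \<sigma>
  proof
    assume h: "\<forall>j<l. v j = l - 1 - \<sigma> j"
    then have "v j < l" if "j < l" for j
      using that by fastforce
    then have v_eq: "\<forall>j<l. v j = l - 1 - j"
      using strict_antimono_on_staircase[OF v] by blast
    have "\<sigma> j = j" if "j < l" for j
      using h v_eq that permutes_in_image[OF \<sigma>, of j] by auto
    then have "\<sigma> = id"
      using \<sigma> by (auto simp: permutes_def fun_eq_iff)
    then show "\<sigma> = id \<and> (\<forall>j<l. v j = l - 1 - j)" using v_eq by simp
  qed simp
  have "alt_psum_coeff l v [] = (\<Sum>\<sigma>\<in>{\<sigma>. \<sigma> permutes {0..<l}}.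
      if \<sigma> = id then (if \<forall>j<l. v j = l - 1 - j then 1 else 0) else 0)"
    unfolding alt_psum_coeff.simps
  proof (intro sum.cong refl)
    fix \<sigma> assume "\<sigma> \<in> {\<sigma>. \<sigma> permutes {0..<l}}"
    then have \<sigma>: "\<sigma> permutes {0..<l}" by simp
    show "(if \<forall>j<l. v j = l - 1 - \<sigma> j then sign \<sigma> else 0) =
        (if \<sigma> = id then (if \<forall>j<l. v j = l - 1 - j then 1 else 0) else 0)"
      unfolding staircase[OF \<sigma>] by auto
  qed
  also have "\<dots> = (if \<forall>j<l. v j = l - 1 - j then 1 else 0)"
    by (simp add: sum.delta finite_permutations permutes_id)
  finally show ?thesis .
qed

section \<open>Signs of difference products\<close>

definition diff_prod :: "nat set \<Rightarrow> (nat \<Rightarrow> nat) \<Rightarrow> (nat \<Rightarrow> nat) \<Rightarrow> int" where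
  "diff_prod H X Y =
     (\<Prod>h\<in>H. \<Prod>h'\<in>{h'\<in>H. h < h'}. (int (X h) - int (X h')) * (int (Y h) - int (Y h')))"

lemma diff_prod_cong:
  "(\<And>h. h \<in> H \<Longrightarrow> X h = X' h) \<Longrightarrow> (\<And>h. h \<in> H \<Longrightarrow> Y h = Y' h) \<Longrightarrow>
    diff_prod H X Y = diff_prod H X' Y'"
  unfolding diff_prod_def by (intro prod.cong refl) auto

lemma diff_prod_commute: "diff_prod H X Y = diff_prod H Y X"
  unfolding diff_prod_def by (simp add: mult.commute)

lemma diff_prod_remove:
  assumes "finite H" "k \<in> H"
  shows "diff_prod H X Y =
    diff_prod (H - {k}) X Y * (\<Prod>h\<in>H - {k}. (int (X h) - int (X k)) * (int (Y h) - int (Y k)))"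
proof -
  define F where "F h h' = (int (X h) - int (X h')) * (int (Y h) - int (Y h'))" for h h'
  define H' where "H' = H - {k}"
  have fin: "finite H'" using assms(1) by (simp add: H'_def)
  have dp: "diff_prod G X Y = (\<Prod>h\<in>G. \<Prod>h'\<in>{h'\<in>G. h < h'}. F h h')" for G
    unfolding diff_prod_def F_def ..
  have row: "(\<Prod>h'\<in>{h'\<in>H. h < h'}. F h h') = (if h < k then F h k else 1) * (\<Prod>h'\<in>{h'\<in>H'. h < h'}. F h h')"
    if "h \<in> H'" for h
  proof -
    have "{h'\<in>H. h < h'} = (if h < k then insert k {h'\<in>H'. h < h'} else {h'\<in>H'. h < h'})"
      using assms(2) by (auto simp: H'_def)
    then show ?thesis using fin by (simp add: H'_def)
  qed
  have "diff_prod H X Y = (\<Prod>h'\<in>{h'\<in>H. k < h'}. F k h') * (\<Prod>h\<in>H'. \<Prod>h'\<in>{h'\<in>H. h < h'}. F h h')"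
    unfolding dp H'_def by (rule prod.remove[OF assms])
  also have "(\<Prod>h'\<in>{h'\<in>H. k < h'}. F k h') = (\<Prod>h\<in>{h\<in>H'. k < h}. F h k)"
  proof (rule prod.cong)
    fix h show "F k h = F h k" by (simp add: F_def algebra_simps)
  qed (auto simp: H'_def)
  also have "(\<Prod>h\<in>H'. \<Prod>h'\<in>{h'\<in>H. h < h'}. F h h') =
      (\<Prod>h\<in>H'. if h < k then F h k else 1) * diff_prod H' X Y"
  proof -
    have "(\<Prod>h\<in>H'. \<Prod>h'\<in>{h'\<in>H. h < h'}. F h h') =
        (\<Prod>h\<in>H'. (if h < k then F h k else 1) * (\<Prod>h'\<in>{h'\<in>H'. h < h'}. F h h'))"
      by (rule prod.cong[OF refl row])
    then show ?thesis by (simp only: prod.distrib dp)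
  qed
  also have "(\<Prod>h\<in>H'. if h < k then F h k else 1) = (\<Prod>h\<in>{h\<in>H'. h < k}. F h k)"
    using fin by (rule prod.inter_filter[symmetric])
  also have "(\<Prod>h\<in>{h\<in>H'. k < h}. F h k) * ((\<Prod>h\<in>{h\<in>H'. h < k}. F h k) * diff_prod H' X Y) =
      diff_prod H' X Y * (\<Prod>h\<in>H'. F h k)"
  proof -
    have "H' = {h\<in>H'. k < h} \<union> {h\<in>H'. h < k}" by (auto simp: H'_def)
    then have "(\<Prod>h\<in>H'. F h k) = (\<Prod>h\<in>{h\<in>H'. k < h} \<union> {h\<in>H'. h < k}. F h k)" by simp
    also have "\<dots> = (\<Prod>h\<in>{h\<in>H'. k < h}. F h k) * (\<Prod>h\<in>{h\<in>H'. h < k}. F h k)"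
      by (rule prod.union_disjoint) (use fin in auto)
    finally have "(\<Prod>h\<in>{h\<in>H'. k < h}. F h k) * (\<Prod>h\<in>{h\<in>H'. h < k}. F h k) = (\<Prod>h\<in>H'. F h k)" ..
    then show ?thesis by (simp add: mult_ac)
  qed
  finally show ?thesis by (simp only: H'_def F_def)
qed

lemma sgn_prod_eq_prod_sgn: "sgn (\<Prod>x\<in>A. f x) = (\<Prod>x\<in>A. sgn (f x :: 'a::linordered_idom))"
  by (induction A rule: infinite_finite_induct) (auto simp: sgn_mult)

lemma prod_minus_one_if: "finite S \<Longrightarrow> (\<Prod>x\<in>S. if P x then -1 else 1) = ((-1 :: int) ^ card {x\<in>S. P x})"
  by (simp add: prod.If_cases Int_def conj_commute)

lemma sgn_int_diff: "sgn (int a - int b) = (if a < b then -1 else if a = b then 0 else 1)"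
  by (simp add: sgn_if)

lemma sgn_diff_prod_insert:
  assumes "finite H" "k \<notin> H" "X k \<notin> X ` H" "Y k \<notin> Y ` H"
  shows "sgn (diff_prod (insert k H) X Y) =
    sgn (diff_prod H X Y) * (-1) ^ (card {h\<in>H. X h < X k} + card {h\<in>H. Y h < Y k})"
proof -
  have factor: "sgn ((int (X h) - int (X k)) * (int (Y h) - int (Y k))) =
      (if X h < X k then -1 else 1) * (if Y h < Y k then -1 else 1)" if "h \<in> H" for h
  proof -
    have "X h \<noteq> X k" using assms(3) that by (metis imageI)
    moreover have "Y h \<noteq> Y k" using assms(4) that by (metis imageI)
    ultimately show ?thesis by (simp add: sgn_mult sgn_int_diff)
  qed
  have "sgn (\<Prod>h\<in>H. (int (X h) - int (X k)) * (int (Y h) - int (Y k))) =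
      (\<Prod>h\<in>H. (if X h < X k then -1 else 1) * (if Y h < Y k then -1 else 1))"
    unfolding sgn_prod_eq_prod_sgn by (rule prod.cong[OF refl factor])
  also have "\<dots> = (-1) ^ (card {h\<in>H. X h < X k} + card {h\<in>H. Y h < Y k})"
    by (simp only: prod.distrib prod_minus_one_if[OF assms(1)] power_add)
  finally have "sgn (\<Prod>h\<in>H. (int (X h) - int (X k)) * (int (Y h) - int (Y k))) =
      (-1) ^ (card {h\<in>H. X h < X k} + card {h\<in>H. Y h < Y k})" .
  moreover have "diff_prod (insert k H) X Y =
      diff_prod H X Y * (\<Prod>h\<in>H. (int (X h) - int (X k)) * (int (Y h) - int (Y k)))"
    using diff_prod_remove[of "insert k H" k X Y] assms(1,2) by simp
  ultimately show ?thesis by (simp add: sgn_mult)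
qed

lemma sgn_diff_prod_lower:
  assumes "finite H" "h \<in> H" "x \<le> X h" "\<And>g. g \<in> H - {h} \<Longrightarrow> X g \<noteq> X h \<and> X g \<noteq> x"
  shows "sgn (diff_prod H (X(h := x)) Y) =
    sgn (diff_prod H X Y) * (-1) ^ card {g \<in> H - {h}. x < X g \<and> X g < X h}"
proof -
  have fin: "finite (H - {h})" using assms(1) by simp
  have rest: "diff_prod (H - {h}) (X(h := x)) Y = diff_prod (H - {h}) X Y"
    by (rule diff_prod_cong) auto
  have row: "(\<Prod>g\<in>H - {h}. (int ((X(h := x)) g) - int ((X(h := x)) h)) * (int (Y g) - int (Y h))) =
      (\<Prod>g\<in>H - {h}. (int (X g) - int x) * (int (Y g) - int (Y h)))"
    by (intro prod.cong) auto
  have factor: "sgn ((int (X g) - int x) * (int (Y g) - int (Y h))) =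
      sgn ((int (X g) - int (X h)) * (int (Y g) - int (Y h))) * (if x < X g \<and> X g < X h then -1 else 1)"
    if "g \<in> H - {h}" for g
    using assms(3) assms(4)[OF that] by (cases "Y g = Y h") (auto simp: sgn_mult sgn_int_diff)
  have "sgn (\<Prod>g\<in>H - {h}. (int (X g) - int x) * (int (Y g) - int (Y h))) =
      (\<Prod>g\<in>H - {h}. sgn ((int (X g) - int (X h)) * (int (Y g) - int (Y h))) *
        (if x < X g \<and> X g < X h then -1 else 1))"
    unfolding sgn_prod_eq_prod_sgn by (rule prod.cong[OF refl factor])
  also have "\<dots> = (\<Prod>g\<in>H - {h}. sgn ((int (X g) - int (X h)) * (int (Y g) - int (Y h)))) *
      (\<Prod>g\<in>H - {h}. if x < X g \<and> X g < X h then -1 else 1)"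
    by (rule prod.distrib)
  also have "\<dots> = sgn (\<Prod>g\<in>H - {h}. (int (X g) - int (X h)) * (int (Y g) - int (Y h))) *
      (-1) ^ card {g \<in> H - {h}. x < X g \<and> X g < X h}"
    by (simp only: sgn_prod_eq_prod_sgn prod_minus_one_if[OF fin])
  finally show ?thesis
    unfolding diff_prod_remove[OF assms(1,2), of "X(h := x)"] diff_prod_remove[OF assms(1,2), of X]
      rest row sgn_mult
    by (simp only: mult_ac)
qed

lemma diff_prod_swap:
  assumes "finite H" "h \<in> H" "h' \<in> H" "h \<noteq> h'"
  shows "diff_prod H (X \<circ> transpose h h') Y = - diff_prod H X Y"
proof -
  define F where "F X h h' = (int (X h) - int (X h')) * (int (Y h) - int (Y h'))" for X h h'
  define H' where "H' = H - {h} - {h'}"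
  have split: "diff_prod H X Y = diff_prod H' X Y * F X h' h * (\<Prod>g\<in>H'. F X g h' * F X g h)" for X
  proof -
    have "diff_prod H X Y = diff_prod (H - {h}) X Y * (\<Prod>g\<in>H - {h}. F X g h)"
      unfolding F_def by (rule diff_prod_remove[OF assms(1,2)])
    also have "diff_prod (H - {h}) X Y = diff_prod H' X Y * (\<Prod>g\<in>H'. F X g h')"
      unfolding F_def H'_def by (rule diff_prod_remove) (use assms in auto)
    also have "(\<Prod>g\<in>H - {h}. F X g h) = F X h' h * (\<Prod>g\<in>H'. F X g h)"
      unfolding H'_def by (rule prod.remove) (use assms in auto)
    finally show ?thesis by (simp add: prod.distrib ac_simps)
  qed
  have "diff_prod H' (X \<circ> transpose h h') Y = diff_prod H' X Y"
    by (rule diff_prod_cong) (auto simp: H'_def transpose_def)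
  moreover have "F (X \<circ> transpose h h') g h' * F (X \<circ> transpose h h') g h = F X g h' * F X g h"
    if "g \<in> H'" for g
    using that by (auto simp: H'_def F_def transpose_def)
  moreover have "F (X \<circ> transpose h h') h' h = - F X h' h"
    by (simp add: F_def algebra_simps)
  ultimately show ?thesis unfolding split[of "X \<circ> transpose h h'"] split[of X] by simp
qed

section \<open>Raising one value of an injective labelling\<close>

lemma bij_betw_insert_iff:
  "k \<notin> H \<Longrightarrow> bij_betw f (insert k H) A \<longleftrightarrow> f k \<in> A \<and> bij_betw f H (A - {f k})"
  unfolding bij_betw_def by (auto simp: inj_on_def)

lemma bij_betw_fun_upd_iff:
  assumes "h \<in> H"
  shows "bij_betw (X(h := x)) H A \<longleftrightarrow> x \<in> A \<and> bij_betw X (H - {h}) (A - {x})"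
proof -
  have "bij_betw (X(h := x)) H A \<longleftrightarrow> x \<in> A \<and> bij_betw (X(h := x)) (H - {h}) (A - {x})"
    using bij_betw_insert_iff[of h "H - {h}" "X(h := x)" A] by (simp add: insert_absorb[OF assms])
  moreover have "bij_betw (X(h := x)) (H - {h}) (A - {x}) \<longleftrightarrow> bij_betw X (H - {h}) (A - {x})"
    by (rule bij_betw_cong) simp
  ultimately show ?thesis by simp
qed

lemma unique_collision:
  assumes "bij_betw (X(h := x)) H A" "h \<in> H" "X h \<in> X ` (H - {h})"
  shows "\<exists>!h'. h' \<in> H - {h} \<and> X h' = X h"
proof -
  obtain h' where h': "h' \<in> H - {h}" "X h' = X h" using assms(3) by (metis imageE)
  have "inj_on X (H - {h})"
    using assms(1,2) bij_betw_fun_upd_iff[of h H X x A] by (simp add: bij_betw_def)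
  then show ?thesis using h' by (metis inj_onD)
qed

text \<open>Raising the value of \<open>X\<close> at \<open>h\<close> by \<open>m\<close> onto an already attained value \<open>X h'\<close>
  and raising it at \<open>h'\<close> instead give the same values up to the transposition of \<open>h\<close> and
  \<open>h'\<close>, hence opposite signs.\<close>

lemma sum_colliding_raises_eq_0:
  assumes "finite H"
  shows "(\<Sum>h\<in>{h\<in>H. bij_betw (X(h := X h + m)) H A \<and> X h \<in> X ` (H - {h})}.
      sgn (diff_prod H (X(h := X h + m)) Y)) = 0"
proof -
  define S where "S = {h\<in>H. bij_betw (X(h := X h + m)) H A \<and> X h \<in> X ` (H - {h})}"
  define partner where "partner h = (THE h'. h' \<in> H - {h} \<and> X h' = X h)" for h
  have unique: "\<exists>!h'. h' \<in> H - {h} \<and> X h' = X h" if "h \<in> S" for h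
    using unique_collision[of X h "X h + m" H A] that by (simp add: S_def)
  have partner: "partner h \<in> H - {h}" "X (partner h) = X h" if "h \<in> S" for h
    using theI'[OF unique[OF that]] by (simp_all add: partner_def)
  have swap: "X(partner h := X (partner h) + m) = X(h := X h + m) \<circ> transpose h (partner h)"
    if "h \<in> S" for h
  proof -
    have "partner h \<noteq> h" "X (partner h) = X h" using partner(1,2)[OF that] by auto
    then show ?thesis by (auto simp: fun_eq_iff transpose_def)
  qed
  show ?thesis
    unfolding S_def[symmetric]
  proof (rule sum_involution_eq_0[where h = partner])
    fix h assume h: "h \<in> S"
    then have hH: "h \<in> H" and p: "partner h \<in> H - {h}" "X (partner h) = X h"
      using partner(1,2)[OF h] h by (auto simp: S_def)
    have \<tau>: "bij_betw (transpose h (partner h)) H H"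
      using hH p by (intro permutes_imp_bij permutes_swap_id) auto
    have "bij_betw (X(partner h := X (partner h) + m)) H A"
      unfolding swap[OF h] using h bij_betw_comp_iff[OF \<tau>] by (auto simp: S_def)
    moreover have "X (partner h) \<in> X ` (H - {partner h})" using hH p by force
    ultimately have pS: "partner h \<in> S" using p by (simp add: S_def)
    then show "partner h \<in> S" .
    have "h \<in> H - {partner h}" "X h = X (partner h)" using hH p by auto
    then have "(THE h'. h' \<in> H - {partner h} \<and> X h' = X (partner h)) = h"
      by (intro the1_equality[OF unique[OF pS]]) simp
    then show "partner (partner h) = h" by (simp only: partner_def[of "partner h"])
    show "partner h \<noteq> h" using p by simp
    show "sgn (diff_prod H (X(partner h := X (partner h) + m)) Y) + sgn (diff_prod H (X(h := X h + m)) Y) = 0"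
      unfolding swap[OF h] using diff_prod_swap[OF assms hH] p by (simp add: sgn_minus)
  qed
qed

lemma card_filter_bij_betw:
  "bij_betw f H B \<Longrightarrow> card {h\<in>H. P (f h)} = card {b\<in>B. P b}"
proof -
  assume bij: "bij_betw f H B"
  then have "{b\<in>B. P b} = f ` {h\<in>H. P (f h)}" by (auto simp: bij_betw_def)
  moreover have "inj_on f {h\<in>H. P (f h)}"
    using bij by (auto simp: bij_betw_def intro: inj_on_subset)
  ultimately show ?thesis by (simp add: card_image)
qed

lemma sgn_diff_prod_raise:
  assumes "finite H" "h \<in> H" "bij_betw X (H - {h}) (A - {a})" "X h < a" "X h \<notin> A"
  shows "sgn (diff_prod H (X(h := a)) Y) = (-1) ^ card {x\<in>A. X h < x \<and> x < a} * sgn (diff_prod H X Y)"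
proof -
  have "sgn (diff_prod H ((X(h := a))(h := X h)) Y) = sgn (diff_prod H (X(h := a)) Y) *
      (-1) ^ card {g \<in> H - {h}. X h < (X(h := a)) g \<and> (X(h := a)) g < (X(h := a)) h}"
  proof (rule sgn_diff_prod_lower[OF assms(1,2)])
    fix g assume "g \<in> H - {h}"
    then have "X g \<in> A - {a}" using bij_betwE[OF assms(3)] by blast
    then show "(X(h := a)) g \<noteq> (X(h := a)) h \<and> (X(h := a)) g \<noteq> X h"
      using \<open>g \<in> H - {h}\<close> assms(5) by auto
  qed (use assms(4) in simp)
  moreover have "{g \<in> H - {h}. X h < (X(h := a)) g \<and> (X(h := a)) g < (X(h := a)) h} =
      {g \<in> H - {h}. X h < X g \<and> X g < a}"
    by auto
  moreover have "card {g \<in> H - {h}. X h < X g \<and> X g < a} = card {x\<in>A - {a}. X h < x \<and> x < a}"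
    using assms(3) by (rule card_filter_bij_betw)
  moreover have "{x\<in>A - {a}. X h < x \<and> x < a} = {x\<in>A. X h < x \<and> x < a}" by auto
  ultimately have "sgn (diff_prod H X Y) =
      sgn (diff_prod H (X(h := a)) Y) * (-1) ^ card {x\<in>A. X h < x \<and> x < a}"
    by simp
  then show ?thesis by simp
qed

lemma sum_noncolliding_raises:
  assumes "finite H" "0 < m"
  shows "(\<Sum>h\<in>{h\<in>H. bij_betw (X(h := X h + m)) H A \<and> X h \<notin> X ` (H - {h})}.
      sgn (diff_prod H (X(h := X h + m)) Y)) =
    (\<Sum>a\<in>{a\<in>A. m \<le> a \<and> a - m \<notin> A \<and> bij_betw X H (insert (a - m) (A - {a}))}.
      (-1) ^ card {x\<in>A. a - m < x \<and> x < a} * sgn (diff_prod H X Y))"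
proof (rule sum.reindex_bij_witness[where i = "\<lambda>a. inv_into H X (a - m)" and j = "\<lambda>h. X h + m"])
  fix h assume "h \<in> {h\<in>H. bij_betw (X(h := X h + m)) H A \<and> X h \<notin> X ` (H - {h})}"
  then have h: "h \<in> H" "X h + m \<in> A" "bij_betw X (H - {h}) (A - {X h + m})" "X h \<notin> X ` (H - {h})"
    using bij_betw_fun_upd_iff[of h H X "X h + m" A] by auto
  then have "X h \<notin> A - {X h + m}" by (simp add: bij_betw_def)
  then have notin: "X h \<notin> A" using assms(2) by auto
  have bij: "bij_betw X H (insert (X h) (A - {X h + m}))"
    using bij_betw_insert_iff[of h "H - {h}" X] h notin by (simp add: insert_absorb)
  then show "inv_into H X (X h + m - m) = h"
    using h(1) by (simp add: bij_betw_def inv_into_f_f)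
  show "X h + m \<in> {a\<in>A. m \<le> a \<and> a - m \<notin> A \<and> bij_betw X H (insert (a - m) (A - {a}))}"
    using h(2) notin bij by simp
  show "(-1) ^ card {x\<in>A. X h + m - m < x \<and> x < X h + m} * sgn (diff_prod H X Y) =
      sgn (diff_prod H (X(h := X h + m)) Y)"
    using sgn_diff_prod_raise[OF assms(1) h(1,3) _ notin] assms(2) by simp
next
  fix a assume "a \<in> {a\<in>A. m \<le> a \<and> a - m \<notin> A \<and> bij_betw X H (insert (a - m) (A - {a}))}"
  then have a: "a \<in> A" "m \<le> a" "a - m \<notin> A" and bij: "bij_betw X H (insert (a - m) (A - {a}))"
    by auto
  define h where "h = inv_into H X (a - m)"
  have h: "h \<in> H" "X h = a - m"
    using bij unfolding h_def bij_betw_def by (auto intro: inv_into_into f_inv_into_f)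
  have rest: "bij_betw X (H - {h}) (A - {a})"
    using bij_betw_insert_iff[of h "H - {h}" X] bij h a(3) by (simp add: insert_absorb Diff_insert_absorb)
  show "X (inv_into H X (a - m)) + m = a" using h a(2) by (simp add: h_def)
  have "X h \<notin> X ` (H - {h})" using rest h(2) a(3) by (auto simp: bij_betw_def)
  then show "inv_into H X (a - m) \<in> {h\<in>H. bij_betw (X(h := X h + m)) H A \<and> X h \<notin> X ` (H - {h})}"
    using bij_betw_fun_upd_iff[of h H X a A] h a rest by (simp add: h_def[symmetric])
qed

lemma sgn_diff_prod_insert_bij_betw:
  assumes "finite H" "k \<notin> H"
  shows "(if bij_betw (X(k := a)) (insert k H) A \<and> bij_betw (Y(k := b)) (insert k H) B
      then sgn (diff_prod (insert k H) (X(k := a)) (Y(k := b))) else 0) =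
    (if a \<in> A \<and> b \<in> B \<and> bij_betw X H (A - {a}) \<and> bij_betw Y H (B - {b})
      then (-1) ^ (card {x\<in>A. x < a} + card {y\<in>B. y < b}) * sgn (diff_prod H X Y) else 0)"
proof -
  have upd: "bij_betw (Z(k := c)) H C \<longleftrightarrow> bij_betw Z H C" for Z :: "nat \<Rightarrow> nat" and c C
    using assms(2) by (intro bij_betw_cong) auto
  have bij: "bij_betw (Z(k := c)) (insert k H) C \<longleftrightarrow> c \<in> C \<and> bij_betw Z H (C - {c})"
    for Z :: "nat \<Rightarrow> nat" and c C
    by (simp add: bij_betw_insert_iff[OF assms(2)] upd)
  have "sgn (diff_prod (insert k H) (X(k := a)) (Y(k := b))) =
      (-1) ^ (card {x\<in>A. x < a} + card {y\<in>B. y < b}) * sgn (diff_prod H X Y)"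
    if XA: "bij_betw X H (A - {a})" and YB: "bij_betw Y H (B - {b})"
  proof -
    have "{x\<in>A - {a}. x < a} = {x\<in>A. x < a}" "{y\<in>B - {b}. y < b} = {y\<in>B. y < b}" by auto
    then have "card {h\<in>H. X h < a} = card {x\<in>A. x < a}" "card {h\<in>H. Y h < b} = card {y\<in>B. y < b}"
      using card_filter_bij_betw[OF XA, of "\<lambda>x. x < a"] card_filter_bij_betw[OF YB, of "\<lambda>y. y < b"]
      by simp_all
    moreover have "diff_prod H (X(k := a)) (Y(k := b)) = diff_prod H X Y"
      using assms(2) by (intro diff_prod_cong) auto
    moreover have eqs: "(X(k := a)) ` H = X ` H" "(Y(k := b)) ` H = Y ` H"
        "{h\<in>H. (X(k := a)) h < (X(k := a)) k} = {h\<in>H. X h < a}"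
        "{h\<in>H. (Y(k := b)) h < (Y(k := b)) k} = {h\<in>H. Y h < b}"
      using assms(2) by auto
    moreover have "a \<notin> X ` H" "b \<notin> Y ` H" using XA YB by (auto simp: bij_betw_def)
    then have "sgn (diff_prod (insert k H) (X(k := a)) (Y(k := b))) =
        sgn (diff_prod H (X(k := a)) (Y(k := b))) *
        (-1) ^ (card {h\<in>H. (X(k := a)) h < (X(k := a)) k} + card {h\<in>H. (Y(k := b)) h < (Y(k := b)) k})"
      by (intro sgn_diff_prod_insert[OF assms]) (simp_all only: eqs fun_upd_same not_False_eq_True)
    ultimately show ?thesis by (simp add: mult.commute)
  qed
  then show ?thesis by (simp add: bij)
qed

lemma sum_raises:
  assumes "finite H" "finite A" "0 < m"
  shows "(\<Sum>h\<in>H. if bij_betw (X(h := X h + m)) H A then sgn (diff_prod H (X(h := X h + m)) Y) else 0) =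
    (\<Sum>a\<in>{a\<in>A. m \<le> a \<and> a - m \<notin> A}. if bij_betw X H (insert (a - m) (A - {a}))
      then (-1) ^ card {x\<in>A. a - m < x \<and> x < a} * sgn (diff_prod H X Y) else 0)"
proof -
  define g where "g h = sgn (diff_prod H (X(h := X h + m)) Y)" for h
  define P where "P h \<longleftrightarrow> bij_betw (X(h := X h + m)) H A" for h
  define S where "S b = {h\<in>H. P h \<and> (X h \<in> X ` (H - {h})) = b}" for b
  have "(\<Sum>h\<in>H. if P h then g h else 0) = sum g {h\<in>H. P h}"
    using assms(1) by (rule sum.inter_filter[symmetric])
  also have "{h\<in>H. P h} = S True \<union> S False" by (auto simp: S_def)
  also have "sum g (S True \<union> S False) = sum g (S True) + sum g (S False)"
    using assms(1) by (intro sum.union_disjoint) (auto simp: S_def)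
  also have "sum g (S True) = 0"
    unfolding g_def S_def P_def using sum_colliding_raises_eq_0[OF assms(1)] by simp
  also have "sum g (S False) = (\<Sum>a\<in>{a\<in>A. m \<le> a \<and> a - m \<notin> A \<and> bij_betw X H (insert (a - m) (A - {a}))}.
      (-1) ^ card {x\<in>A. a - m < x \<and> x < a} * sgn (diff_prod H X Y))"
    unfolding g_def S_def P_def using sum_noncolliding_raises[OF assms(1,3)] by simp
  also have "\<dots> = (\<Sum>a\<in>{a\<in>A. m \<le> a \<and> a - m \<notin> A}. if bij_betw X H (insert (a - m) (A - {a}))
      then (-1) ^ card {x\<in>A. a - m < x \<and> x < a} * sgn (diff_prod H X Y) else 0)"
    using assms(2) by (subst sum.inter_filter[symmetric]) (simp_all add: conj_assoc)
  finally show ?thesis unfolding g_def P_def by simp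
qed

section \<open>Filled structures by their last block\<close>

definition fstructs :: "nat list \<Rightarrow> fstruct set" where
  "fstructs \<rho> = {T. filled_structure (length \<rho>) T \<and> map bcard (snd T) = \<rho>}"

definition fs_snoc :: "fstruct \<Rightarrow> nat \<Rightarrow> block \<Rightarrow> fstruct" where
  "fs_snoc T h blk = (fst T @ [h], snd T @ [blk])"

lemma fstructs_length:
  "T \<in> fstructs \<rho> \<Longrightarrow> length (fst T) = length \<rho> \<and> length (snd T) = length \<rho>"
  unfolding fstructs_def filled_structure_def by (auto split: prod.splits)

lemma fstructs_nth:
  assumes "T \<in> fstructs \<rho>" "i < length \<rho>"
  shows "fst T ! i \<le> i" "bcard (snd T ! i) = \<rho> ! i"
proof -
  obtain r b where T: "T = (r, b)" by (cases T)
  then have fs: "filled_structure (length \<rho>) (r, b)" and map: "map bcard b = \<rho>"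
    using assms(1) by (simp_all add: fstructs_def)
  from fs have "\<forall>i<length \<rho>. r ! i \<le> i" unfolding filled_structure_def by auto
  then show "fst T ! i \<le> i" using assms(2) T by simp
  from map assms(2) show "bcard (snd T ! i) = \<rho> ! i" using T by auto
qed

lemma hooks_subset: "hooks T \<subseteq> {..<length (fst T)}"
  unfolding hooks_def by auto

lemma finite_hooks [simp]: "finite (hooks T)"
  using hooks_subset finite_subset by blast

lemma filled_structure_snoc:
  assumes "length r = k" "length b = k"
  shows "filled_structure (Suc k) (r @ [h], b @ [blk]) \<longleftrightarrow>
    filled_structure k (r, b) \<and> blk \<noteq> Hor 0 \<and> blk \<noteq> Ver 0 \<and>
    (if is_hook blk then h = k else h \<in> hooks (r, b))"
proof -
  define P where "P r' b' i \<longleftrightarrow> r' ! i \<le> i \<and> r' ! (r' ! i) = r' ! i \<and>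
      (r' ! i = i \<longleftrightarrow> is_hook (b' ! i)) \<and> b' ! i \<noteq> Hor 0 \<and> b' ! i \<noteq> Ver 0"
    for r' :: "nat list" and b' :: "block list" and i
  have fs: "filled_structure n (r', b') \<longleftrightarrow> length r' = n \<and> length b' = n \<and> (\<forall>i<n. P r' b' i)" for n r' b'
    unfolding filled_structure_def P_def by simp
  have old: "P (r @ [h]) (b @ [blk]) i \<longleftrightarrow> P r b i" if "i < k" for i
    using that assms by (cases "r ! i \<le> i") (auto simp: P_def nth_append)
  have new: "P (r @ [h]) (b @ [blk]) k \<longleftrightarrow>
      blk \<noteq> Hor 0 \<and> blk \<noteq> Ver 0 \<and> (if is_hook blk then h = k else h \<in> hooks (r, b))"
    using assms by (cases "is_hook blk") (auto simp: P_def nth_append hooks_def)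
  have "(\<forall>i<k. P (r @ [h]) (b @ [blk]) i) \<longleftrightarrow> (\<forall>i<k. P r b i)"
    using old by blast
  then show ?thesis
    unfolding fs All_less_Suc new using assms by auto
qed

lemma fs_snoc_mem_fstructs_iff:
  assumes "T \<in> fstructs \<rho>"
  shows "fs_snoc T h blk \<in> fstructs (\<rho> @ [m]) \<longleftrightarrow>
    bcard blk = m \<and> blk \<noteq> Hor 0 \<and> blk \<noteq> Ver 0 \<and> (if is_hook blk then h = length \<rho> else h \<in> hooks T)"
  using assms fstructs_length[OF assms] filled_structure_snoc[of "fst T" "length \<rho>" "snd T" h blk]
  by (auto simp: fstructs_def fs_snoc_def)

lemma fstructs_snoc_decompose:
  assumes "T \<in> fstructs (\<rho> @ [m])"
  obtains T' h blk where "T' \<in> fstructs \<rho>" "T = fs_snoc T' h blk"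
proof -
  obtain r b where T: "T = (r, b)" by (cases T)
  have len: "length r = Suc (length \<rho>)" "length b = Suc (length \<rho>)"
    using fstructs_length[OF assms] T by auto
  then have rb: "r = butlast r @ [last r]" "b = butlast b @ [last b]"
    by (metis append_butlast_last_id list.size(3) nat.distinct(1))+
  have "filled_structure (length \<rho>) (butlast r, butlast b)" "map bcard (butlast b) = \<rho>"
    using assms filled_structure_snoc[of "butlast r" "length \<rho>" "butlast b" "last r" "last b"] len rb T
    by (auto simp: fstructs_def map_butlast)
  then have "(butlast r, butlast b) \<in> fstructs \<rho>" by (simp add: fstructs_def)
  moreover have "T = fs_snoc (butlast r, butlast b) (last r) (last b)"
    using rb T by (simp add: fs_snoc_def)
  ultimately show thesis by (rule that)
qed

lemma fs_snoc_eq_iff: "fs_snoc T h blk = fs_snoc T' h' blk' \<longleftrightarrow> T = T' \<and> h = h' \<and> blk = blk'"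
  by (cases T, cases T') (auto simp: fs_snoc_def)

lemma finite_fstructs: "finite (fstructs \<rho>)"
proof -
  define N where "N = sum_list \<rho>"
  define blocks where "blocks = (\<lambda>(p, q). Hook p q) ` ({..N} \<times> {..N}) \<union> Hor ` {..N} \<union> Ver ` {..N}"
  have "fstructs \<rho> \<subseteq> {r. set r \<subseteq> {..length \<rho>} \<and> length r = length \<rho>} \<times> {b. set b \<subseteq> blocks \<and> length b = length \<rho>}"
  proof
    fix T assume T: "T \<in> fstructs \<rho>"
    obtain r b where rb: "T = (r, b)" by (cases T)
    note len = fstructs_length[OF T] and nth = fstructs_nth[OF T]
    have "x \<in> {..length \<rho>}" if "x \<in> set r" for x
    proof -
      obtain i where "i < length \<rho>" "x = r ! i" using \<open>x \<in> set r\<close> len rb by (auto simp: in_set_conv_nth)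
      then show ?thesis using nth(1)[of i] rb by simp
    qed
    moreover have "x \<in> blocks" if "x \<in> set b" for x
    proof -
      obtain i where i: "i < length \<rho>" "x = b ! i" using \<open>x \<in> set b\<close> len rb by (auto simp: in_set_conv_nth)
      then have "bcard x \<le> N" using nth(2)[OF i(1)] rb by (simp add: N_def member_le_sum_list)
      then show ?thesis unfolding blocks_def by (cases x) auto
    qed
    ultimately show "T \<in> {r. set r \<subseteq> {..length \<rho>} \<and> length r = length \<rho>} \<times> {b. set b \<subseteq> blocks \<and> length b = length \<rho>}"
      using len rb by auto
  qed
  moreover have "finite blocks" unfolding blocks_def by simp
  then have "finite ({r. set r \<subseteq> {..length \<rho>} \<and> length r = length \<rho>} \<times> {b. set b \<subseteq> blocks \<and> length b = length \<rho>})"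
    by (intro finite_cartesian_product finite_lists_length_eq) auto
  ultimately show ?thesis by (rule finite_subset)
qed

definition last_blocks :: "nat list \<Rightarrow> nat \<Rightarrow> fstruct \<Rightarrow> (nat \<times> block) set" where
  "last_blocks \<rho> m T = (\<lambda>h. (h, Hor m)) ` hooks T \<union> (\<lambda>h. (h, Ver m)) ` hooks T \<union>
     (\<lambda>a. (length \<rho>, Hook a (m - 1 - a))) ` {..<m}"

lemma fs_snoc_mem_fstructs_iff_last_blocks:
  assumes "0 < m" "T \<in> fstructs \<rho>"
  shows "fs_snoc T h blk \<in> fstructs (\<rho> @ [m]) \<longleftrightarrow> (h, blk) \<in> last_blocks \<rho> m T"
proof -
  have "bcard blk = m \<and> blk \<noteq> Hor 0 \<and> blk \<noteq> Ver 0 \<and> (if is_hook blk then h = length \<rho> else h \<in> hooks T)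
      \<longleftrightarrow> (h, blk) \<in> last_blocks \<rho> m T"
    using assms(1) by (cases blk) (auto simp: last_blocks_def image_iff)
  then show ?thesis using fs_snoc_mem_fstructs_iff[OF assms(2)] by simp
qed

lemma fstructs_snoc_eq_image:
  assumes "0 < m"
  shows "fstructs (\<rho> @ [m]) = (\<lambda>(T, h, blk). fs_snoc T h blk) ` Sigma (fstructs \<rho>) (last_blocks \<rho> m)"
proof
  show "fstructs (\<rho> @ [m]) \<subseteq> (\<lambda>(T, h, blk). fs_snoc T h blk) ` Sigma (fstructs \<rho>) (last_blocks \<rho> m)"
  proof
    fix T assume T: "T \<in> fstructs (\<rho> @ [m])"
    then obtain T' h blk where T': "T' \<in> fstructs \<rho>" "T = fs_snoc T' h blk"
      by (rule fstructs_snoc_decompose)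
    then have "(T', h, blk) \<in> Sigma (fstructs \<rho>) (last_blocks \<rho> m)"
      using T fs_snoc_mem_fstructs_iff_last_blocks[OF assms] by auto
    then show "T \<in> (\<lambda>(T, h, blk). fs_snoc T h blk) ` Sigma (fstructs \<rho>) (last_blocks \<rho> m)"
      by (rule rev_image_eqI) (simp add: T')
  qed
qed (use fs_snoc_mem_fstructs_iff_last_blocks[OF assms] in auto)

lemma sum_fstructs_snoc:
  assumes "0 < m"
  shows "(\<Sum>T\<in>fstructs (\<rho> @ [m]). f T) = (\<Sum>T\<in>fstructs \<rho>.
    (\<Sum>h\<in>hooks T. f (fs_snoc T h (Hor m)) + f (fs_snoc T h (Ver m))) +
    (\<Sum>a<m. f (fs_snoc T (length \<rho>) (Hook a (m - 1 - a)))))"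
proof -
  have "inj_on (\<lambda>(T, h, blk). fs_snoc T h blk) (Sigma (fstructs \<rho>) (last_blocks \<rho> m))"
    by (auto simp: inj_on_def fs_snoc_eq_iff)
  then have "(\<Sum>T\<in>fstructs (\<rho> @ [m]). f T) = (\<Sum>(T, h, blk)\<in>Sigma (fstructs \<rho>) (last_blocks \<rho> m). f (fs_snoc T h blk))"
    unfolding fstructs_snoc_eq_image[OF assms] by (simp add: sum.reindex case_prod_unfold)
  also have "\<dots> = (\<Sum>T\<in>fstructs \<rho>. \<Sum>(h, blk)\<in>last_blocks \<rho> m T. f (fs_snoc T h blk))"
    using finite_fstructs by (subst sum.Sigma) (auto simp: last_blocks_def)
  also have "\<dots> = (\<Sum>T\<in>fstructs \<rho>.
      (\<Sum>h\<in>hooks T. f (fs_snoc T h (Hor m)) + f (fs_snoc T h (Ver m))) +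
      (\<Sum>a<m. f (fs_snoc T (length \<rho>) (Hook a (m - 1 - a)))))"
  proof (rule sum.cong[OF refl])
    fix T
    define G where "G = (\<lambda>(h, blk). f (fs_snoc T h blk))"
    have "sum G (last_blocks \<rho> m T) = sum G ((\<lambda>h. (h, Hor m)) ` hooks T) +
        sum G ((\<lambda>h. (h, Ver m)) ` hooks T) + sum G ((\<lambda>a. (length \<rho>, Hook a (m - 1 - a))) ` {..<m})"
      unfolding last_blocks_def by (subst sum.union_disjoint, auto)+
    then show "(\<Sum>(h, blk)\<in>last_blocks \<rho> m T. f (fs_snoc T h blk)) =
        (\<Sum>h\<in>hooks T. f (fs_snoc T h (Hor m)) + f (fs_snoc T h (Ver m))) +
        (\<Sum>a<m. f (fs_snoc T (length \<rho>) (Hook a (m - 1 - a))))"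
      by (simp add: G_def sum.reindex inj_on_def sum.distrib)
  qed
  finally show ?thesis .
qed

lemma hooks_fs_snoc:
  assumes "T \<in> fstructs \<rho>" "h \<le> length \<rho>"
  shows "hooks (fs_snoc T h blk) = (if h = length \<rho> then insert h (hooks T) else hooks T)"
  using fstructs_length[OF assms(1)] assms(2) unfolding hooks_def fs_snoc_def by (auto simp: nth_append)

lemma hooks_less_length: "T \<in> fstructs \<rho> \<Longrightarrow> h \<in> hooks T \<Longrightarrow> h < length \<rho>"
  using hooks_subset fstructs_length by fastforce

lemma fill_fs_snoc:
  assumes T: "T \<in> fstructs \<rho>" and g: "g < length \<rho>"
  shows "fillP (fs_snoc T h blk) g = fillP T g + (if g = h then hor_val blk else 0)"
    and "fillQ (fs_snoc T h blk) g = fillQ T g + (if g = h then ver_val blk else 0)"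
proof -
  note len = fstructs_length[OF T]
  have frag: "fragment (fs_snoc T h blk) g = (if g = h then insert (length \<rho>) (fragment T g) else fragment T g)"
    using len unfolding fragment_def fs_snoc_def by (auto simp: nth_append less_Suc_eq)
  have "length \<rho> \<notin> fragment T g" "finite (fragment T g)"
    using len by (auto simp: fragment_def)
  moreover have "snd (fs_snoc T h blk) ! i = snd T ! i" if "i \<in> fragment T g \<or> i = g" for i
    using that len g by (auto simp: fs_snoc_def fragment_def nth_append)
  moreover have "snd (fs_snoc T h blk) ! length \<rho> = blk"
    using len by (simp add: fs_snoc_def nth_append)
  ultimately show "fillP (fs_snoc T h blk) g = fillP T g + (if g = h then hor_val blk else 0)"
    and "fillQ (fs_snoc T h blk) g = fillQ T g + (if g = h then ver_val blk else 0)"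
    unfolding fillP_def fillQ_def frag by (auto intro!: sum.cong)
qed

lemma fill_fs_snoc_new:
  assumes T: "T \<in> fstructs \<rho>"
  shows "fillP (fs_snoc T (length \<rho>) blk) (length \<rho>) = hook_p blk + hor_val blk"
    and "fillQ (fs_snoc T (length \<rho>) blk) (length \<rho>) = hook_q blk + ver_val blk"
proof -
  note len = fstructs_length[OF T]
  have "fst T ! i \<noteq> length \<rho>" if "i < length \<rho>" for i
    using fstructs_nth(1)[OF T that] that by simp
  then have "fragment (fs_snoc T (length \<rho>) blk) (length \<rho>) = {length \<rho>}"
    using len unfolding fragment_def fs_snoc_def by (auto simp: nth_append less_Suc_eq)
  then show "fillP (fs_snoc T (length \<rho>) blk) (length \<rho>) = hook_p blk + hor_val blk"
    and "fillQ (fs_snoc T (length \<rho>) blk) (length \<rho>) = hook_q blk + ver_val blk"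
    using len by (simp_all add: fillP_def fillQ_def fs_snoc_def nth_append)
qed

lemma n_vertical_fs_snoc:
  assumes "T \<in> fstructs \<rho>"
  shows "n_vertical (fs_snoc T h blk) = n_vertical T + (if is_ver blk then 1 else 0)"
proof -
  have "{i. i < length (snd (fs_snoc T h blk)) \<and> is_ver (snd (fs_snoc T h blk) ! i)} =
      {i. i < length (snd T) \<and> is_ver (snd T ! i)} \<union> (if is_ver blk then {length (snd T)} else {})"
    by (auto simp: fs_snoc_def nth_append less_Suc_eq)
  then show ?thesis unfolding n_vertical_def by auto
qed

section \<open>Signed counts of filled structures\<close>

definition fs_parity :: "fstruct \<Rightarrow> int" where
  "fs_parity T = (-1) ^ ((\<Sum>h\<in>hooks T. fillQ T h) + n_vertical T)"

lemma sgnT_eq: "sgnT T = sgn (diff_prod (hooks T) (fillP T) (fillQ T)) * fs_parity T"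
  unfolding sgnT_def diff_prod_def fs_parity_def ..

definition fs_term :: "nat set \<Rightarrow> nat set \<Rightarrow> fstruct \<Rightarrow> int" where
  "fs_term A B T =
     (if bij_betw (fillP T) (hooks T) A \<and> bij_betw (fillQ T) (hooks T) B then sgnT T else 0)"

lemma fs_term_snoc_Hor:
  fixes m :: nat
  assumes T: "T \<in> fstructs \<rho>" and h: "h \<in> hooks T"
  defines "X \<equiv> (fillP T)(h := fillP T h + m)"
  shows "fs_term A B (fs_snoc T h (Hor m)) =
    (if bij_betw (fillQ T) (hooks T) B then fs_parity T else 0) *
    (if bij_betw X (hooks T) A then sgn (diff_prod (hooks T) X (fillQ T)) else 0)"
proof -
  define T' where "T' = fs_snoc T h (Hor m)"
  have hooks: "hooks T' = hooks T"
    using hooks_fs_snoc[OF T] hooks_less_length[OF T h] by (simp add: T'_def)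
  have P: "fillP T' g = X g" and Q: "fillQ T' g = fillQ T g" if "g \<in> hooks T" for g
    using fill_fs_snoc[OF T hooks_less_length[OF T that]] by (auto simp: T'_def X_def)
  have "(\<Sum>g\<in>hooks T'. fillQ T' g) = (\<Sum>g\<in>hooks T. fillQ T g)"
    unfolding hooks by (rule sum.cong) (simp_all add: Q)
  moreover have "n_vertical T' = n_vertical T" using n_vertical_fs_snoc[OF T] by (simp add: T'_def)
  ultimately have "fs_parity T' = fs_parity T" by (simp add: fs_parity_def)
  moreover have "diff_prod (hooks T') (fillP T') (fillQ T') = diff_prod (hooks T) X (fillQ T)"
    unfolding hooks by (rule diff_prod_cong) (simp_all add: P Q)
  moreover have "bij_betw (fillP T') (hooks T') A \<longleftrightarrow> bij_betw X (hooks T) A"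
    "bij_betw (fillQ T') (hooks T') B \<longleftrightarrow> bij_betw (fillQ T) (hooks T) B"
    unfolding hooks by (simp_all add: P Q cong: bij_betw_cong)
  ultimately show ?thesis
    unfolding fs_term_def sgnT_eq T'_def[symmetric] by auto
qed

lemma fs_term_snoc_Ver:
  fixes m :: nat
  assumes T: "T \<in> fstructs \<rho>" and h: "h \<in> hooks T"
  defines "Y \<equiv> (fillQ T)(h := fillQ T h + m)"
  shows "fs_term A B (fs_snoc T h (Ver m)) =
    (if bij_betw (fillP T) (hooks T) A then (-1) ^ (m + 1) * fs_parity T else 0) *
    (if bij_betw Y (hooks T) B then sgn (diff_prod (hooks T) Y (fillP T)) else 0)"
proof -
  define T' where "T' = fs_snoc T h (Ver m)"
  have hooks: "hooks T' = hooks T"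
    using hooks_fs_snoc[OF T] hooks_less_length[OF T h] by (simp add: T'_def)
  have P: "fillP T' g = fillP T g" and Q: "fillQ T' g = Y g" if "g \<in> hooks T" for g
    using fill_fs_snoc[OF T hooks_less_length[OF T that]] by (auto simp: T'_def Y_def)
  have "(\<Sum>g\<in>hooks T'. fillQ T' g) = (\<Sum>g\<in>hooks T. Y g)"
    unfolding hooks by (rule sum.cong) (simp_all add: Q)
  also have "\<dots> = (\<Sum>g\<in>hooks T. fillQ T g) + m"
    using h by (simp add: Y_def sum.remove add.commute add.left_commute)
  finally have "(\<Sum>g\<in>hooks T'. fillQ T' g) = (\<Sum>g\<in>hooks T. fillQ T g) + m" .
  moreover have "n_vertical T' = n_vertical T + 1" using n_vertical_fs_snoc[OF T] by (simp add: T'_def)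
  ultimately have "fs_parity T' = (-1) ^ (m + 1) * fs_parity T"
    by (simp add: fs_parity_def power_add)
  moreover have "diff_prod (hooks T') (fillP T') (fillQ T') = diff_prod (hooks T) Y (fillP T)"
    unfolding hooks diff_prod_commute[of _ "fillP T'"] by (rule diff_prod_cong) (simp_all add: P Q)
  moreover have "bij_betw (fillP T') (hooks T') A \<longleftrightarrow> bij_betw (fillP T) (hooks T) A"
    "bij_betw (fillQ T') (hooks T') B \<longleftrightarrow> bij_betw Y (hooks T) B"
    unfolding hooks by (simp_all add: P Q cong: bij_betw_cong)
  ultimately show ?thesis
    unfolding fs_term_def sgnT_eq T'_def[symmetric] by auto
qed

lemma fs_term_snoc_Hook:
  assumes T: "T \<in> fstructs \<rho>"
  defines "k \<equiv> length \<rho>"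
  shows "fs_term A B (fs_snoc T k (Hook a b)) = (-1) ^ b * fs_parity T *
    (if bij_betw ((fillP T)(k := a)) (insert k (hooks T)) A \<and> bij_betw ((fillQ T)(k := b)) (insert k (hooks T)) B
     then sgn (diff_prod (insert k (hooks T)) ((fillP T)(k := a)) ((fillQ T)(k := b))) else 0)"
proof -
  define T' where "T' = fs_snoc T k (Hook a b)"
  have k: "k \<notin> hooks T" using hooks_less_length[OF T] by (auto simp: k_def)
  have hooks: "hooks T' = insert k (hooks T)"
    using hooks_fs_snoc[OF T] by (simp add: T'_def k_def)
  have P: "fillP T' g = ((fillP T)(k := a)) g" and Q: "fillQ T' g = ((fillQ T)(k := b)) g"
    if "g \<in> insert k (hooks T)" for g
    using that fill_fs_snoc[OF T hooks_less_length[OF T], of g k "Hook a b"] fill_fs_snoc_new[OF T]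
    by (auto simp: T'_def k_def)
  have "(\<Sum>g\<in>hooks T'. fillQ T' g) = (\<Sum>g\<in>insert k (hooks T). ((fillQ T)(k := b)) g)"
    unfolding hooks by (rule sum.cong) (simp_all add: Q)
  also have "\<dots> = b + (\<Sum>g\<in>hooks T. ((fillQ T)(k := b)) g)" using k by simp
  also have "(\<Sum>g\<in>hooks T. ((fillQ T)(k := b)) g) = (\<Sum>g\<in>hooks T. fillQ T g)"
    using k by (intro sum.cong) auto
  finally have "(\<Sum>g\<in>hooks T'. fillQ T' g) = b + (\<Sum>g\<in>hooks T. fillQ T g)" .
  moreover have "n_vertical T' = n_vertical T" using n_vertical_fs_snoc[OF T] by (simp add: T'_def)
  ultimately have "fs_parity T' = (-1) ^ b * fs_parity T"
    by (simp add: fs_parity_def power_add)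
  moreover have "diff_prod (hooks T') (fillP T') (fillQ T') =
      diff_prod (insert k (hooks T)) ((fillP T)(k := a)) ((fillQ T)(k := b))"
    unfolding hooks by (rule diff_prod_cong) (simp_all add: P Q)
  moreover have "bij_betw (fillP T') (hooks T') A \<longleftrightarrow> bij_betw ((fillP T)(k := a)) (insert k (hooks T)) A"
    "bij_betw (fillQ T') (hooks T') B \<longleftrightarrow> bij_betw ((fillQ T)(k := b)) (insert k (hooks T)) B"
    unfolding hooks by (simp_all only: P Q cong: bij_betw_cong)
  ultimately show ?thesis
    unfolding fs_term_def sgnT_eq T'_def[symmetric] by auto
qed

definition fs_sum :: "nat set \<Rightarrow> nat set \<Rightarrow> nat list \<Rightarrow> int" where
  "fs_sum A B \<rho> = (\<Sum>T\<in>fstructs \<rho>. fs_term A B T)"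

lemma sum_fs_term_snoc_Hor:
  assumes T: "T \<in> fstructs \<rho>" and "finite A" "0 < m"
  shows "(\<Sum>h\<in>hooks T. fs_term A B (fs_snoc T h (Hor m))) =
    (\<Sum>a\<in>{a\<in>A. m \<le> a \<and> a - m \<notin> A}.
      (-1) ^ card {x\<in>A. a - m < x \<and> x < a} * fs_term (insert (a - m) (A - {a})) B T)"
proof -
  define c where "c = (if bij_betw (fillQ T) (hooks T) B then fs_parity T else 0)"
  have "(\<Sum>h\<in>hooks T. fs_term A B (fs_snoc T h (Hor m))) = (\<Sum>h\<in>hooks T. c *
      (if bij_betw ((fillP T)(h := fillP T h + m)) (hooks T) A
       then sgn (diff_prod (hooks T) ((fillP T)(h := fillP T h + m)) (fillQ T)) else 0))"
    unfolding c_def by (rule sum.cong[OF refl]) (rule fs_term_snoc_Hor[OF T])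
  also have "\<dots> = c * (\<Sum>a\<in>{a\<in>A. m \<le> a \<and> a - m \<notin> A}.
      if bij_betw (fillP T) (hooks T) (insert (a - m) (A - {a}))
      then (-1) ^ card {x\<in>A. a - m < x \<and> x < a} * sgn (diff_prod (hooks T) (fillP T) (fillQ T)) else 0)"
    unfolding sum_distrib_left[symmetric] sum_raises[OF finite_hooks assms(2,3)] ..
  also have "\<dots> = (\<Sum>a\<in>{a\<in>A. m \<le> a \<and> a - m \<notin> A}.
      (-1) ^ card {x\<in>A. a - m < x \<and> x < a} * fs_term (insert (a - m) (A - {a})) B T)"
    unfolding sum_distrib_left fs_term_def sgnT_eq c_def by (intro sum.cong refl) auto
  finally show ?thesis .
qed

lemma sum_fs_term_snoc_Ver:
  assumes T: "T \<in> fstructs \<rho>" and "finite B" "0 < m"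
  shows "(\<Sum>h\<in>hooks T. fs_term A B (fs_snoc T h (Ver m))) =
    (\<Sum>b\<in>{b\<in>B. m \<le> b \<and> b - m \<notin> B}.
      (-1) ^ (m + 1 + card {y\<in>B. b - m < y \<and> y < b}) * fs_term A (insert (b - m) (B - {b})) T)"
proof -
  define c where "c = (if bij_betw (fillP T) (hooks T) A then (-1) ^ (m + 1) * fs_parity T else 0)"
  have "(\<Sum>h\<in>hooks T. fs_term A B (fs_snoc T h (Ver m))) = (\<Sum>h\<in>hooks T. c *
      (if bij_betw ((fillQ T)(h := fillQ T h + m)) (hooks T) B
       then sgn (diff_prod (hooks T) ((fillQ T)(h := fillQ T h + m)) (fillP T)) else 0))"
    unfolding c_def by (rule sum.cong[OF refl]) (rule fs_term_snoc_Ver[OF T])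
  also have "\<dots> = c * (\<Sum>b\<in>{b\<in>B. m \<le> b \<and> b - m \<notin> B}.
      if bij_betw (fillQ T) (hooks T) (insert (b - m) (B - {b}))
      then (-1) ^ card {y\<in>B. b - m < y \<and> y < b} * sgn (diff_prod (hooks T) (fillQ T) (fillP T)) else 0)"
    unfolding sum_distrib_left[symmetric] sum_raises[OF finite_hooks assms(2,3)] ..
  also have "\<dots> = (\<Sum>b\<in>{b\<in>B. m \<le> b \<and> b - m \<notin> B}.
      (-1) ^ (m + 1 + card {y\<in>B. b - m < y \<and> y < b}) * fs_term A (insert (b - m) (B - {b})) T)"
    unfolding sum_distrib_left fs_term_def sgnT_eq c_def diff_prod_commute[of _ "fillQ T"]
    by (intro sum.cong refl) (auto simp: power_add)
  finally show ?thesis .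
qed

lemma sum_fs_term_snoc_Hook:
  assumes T: "T \<in> fstructs \<rho>"
  shows "(\<Sum>a<m. fs_term A B (fs_snoc T (length \<rho>) (Hook a (m - 1 - a)))) =
    (\<Sum>a\<in>{a\<in>A. a < m \<and> m - 1 - a \<in> B}.
      (-1) ^ (card {x\<in>A. x < a} + card {y\<in>B. y < m - 1 - a} + (m - 1 - a)) *
      fs_term (A - {a}) (B - {m - 1 - a}) T)"
proof -
  define t where "t a = (-1) ^ (card {x\<in>A. x < a} + card {y\<in>B. y < m - 1 - a} + (m - 1 - a)) *
      fs_term (A - {a}) (B - {m - 1 - a}) T" for a
  have k: "length \<rho> \<notin> hooks T" using hooks_less_length[OF T] by blast
  have "fs_term A B (fs_snoc T (length \<rho>) (Hook a (m - 1 - a))) =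
      (if a \<in> A \<and> m - 1 - a \<in> B then t a else 0)" for a
  proof -
    have "fs_term A B (fs_snoc T (length \<rho>) (Hook a (m - 1 - a))) = (-1) ^ (m - 1 - a) * fs_parity T *
      (if bij_betw ((fillP T)(length \<rho> := a)) (insert (length \<rho>) (hooks T)) A \<and>
          bij_betw ((fillQ T)(length \<rho> := m - 1 - a)) (insert (length \<rho>) (hooks T)) B
       then sgn (diff_prod (insert (length \<rho>) (hooks T)) ((fillP T)(length \<rho> := a))
         ((fillQ T)(length \<rho> := m - 1 - a))) else 0)"
      by (rule fs_term_snoc_Hook[OF T])
    also have "\<dots> = (if a \<in> A \<and> m - 1 - a \<in> B then t a else 0)"
      unfolding sgn_diff_prod_insert_bij_betw[OF finite_hooks k] t_def fs_term_def sgnT_eq by (auto simp: power_add)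
    finally show ?thesis .
  qed
  then have "(\<Sum>a<m. fs_term A B (fs_snoc T (length \<rho>) (Hook a (m - 1 - a)))) =
      (\<Sum>a\<in>{a\<in>{..<m}. a \<in> A \<and> m - 1 - a \<in> B}. t a)"
    by (simp only: sum.inter_filter[OF finite_lessThan])
  also have "{a\<in>{..<m}. a \<in> A \<and> m - 1 - a \<in> B} = {a\<in>A. a < m \<and> m - 1 - a \<in> B}" by auto
  finally show ?thesis unfolding t_def .
qed

theorem fs_sum_snoc:
  assumes "0 < m" "finite A" "finite B"
  shows "fs_sum A B (\<rho> @ [m]) =
    (\<Sum>a\<in>{a\<in>A. m \<le> a \<and> a - m \<notin> A}.
      (-1) ^ card {x\<in>A. a - m < x \<and> x < a} * fs_sum (insert (a - m) (A - {a})) B \<rho>) +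
    (\<Sum>b\<in>{b\<in>B. m \<le> b \<and> b - m \<notin> B}.
      (-1) ^ (m + 1 + card {y\<in>B. b - m < y \<and> y < b}) * fs_sum A (insert (b - m) (B - {b})) \<rho>) +
    (\<Sum>a\<in>{a\<in>A. a < m \<and> m - 1 - a \<in> B}.
      (-1) ^ (card {x\<in>A. x < a} + card {y\<in>B. y < m - 1 - a} + (m - 1 - a)) *
      fs_sum (A - {a}) (B - {m - 1 - a}) \<rho>)"
proof -
  have "fs_sum A B (\<rho> @ [m]) = (\<Sum>T\<in>fstructs \<rho>.
      (\<Sum>a\<in>{a\<in>A. m \<le> a \<and> a - m \<notin> A}.
        (-1) ^ card {x\<in>A. a - m < x \<and> x < a} * fs_term (insert (a - m) (A - {a})) B T) +
      (\<Sum>b\<in>{b\<in>B. m \<le> b \<and> b - m \<notin> B}.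
        (-1) ^ (m + 1 + card {y\<in>B. b - m < y \<and> y < b}) * fs_term A (insert (b - m) (B - {b})) T) +
      (\<Sum>a\<in>{a\<in>A. a < m \<and> m - 1 - a \<in> B}.
        (-1) ^ (card {x\<in>A. x < a} + card {y\<in>B. y < m - 1 - a} + (m - 1 - a)) *
        fs_term (A - {a}) (B - {m - 1 - a}) T))"
    unfolding fs_sum_def sum_fstructs_snoc[OF assms(1)]
    by (intro sum.cong refl)
      (simp only: sum.distrib sum_fs_term_snoc_Hor[OF _ assms(2,1)] sum_fs_term_snoc_Ver[OF _ assms(3,1)]
        sum_fs_term_snoc_Hook)
  then show ?thesis
    unfolding fs_sum_def sum_distrib_left sum.distrib by (simp add: sum.swap[of _ "fstructs \<rho>"])
qed

section \<open>Frobenius coordinates of beta-sets\<close>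

text \<open>A set \<open>C\<close> of \<open>l\<close> beta-numbers determines a partition with Frobenius coordinates
  \<open>beta_arms l C\<close> (the numbers \<open>\<ge> l\<close>, shifted down by \<open>l\<close>) and \<open>beta_legs l C\<close> (the gaps
  below \<open>l\<close>, reflected at \<open>l - 1\<close>).\<close>

definition beta_arms :: "nat \<Rightarrow> nat set \<Rightarrow> nat set" where
  "beta_arms l C = (\<lambda>c. c - l) ` {c\<in>C. l \<le> c}"

definition beta_legs :: "nat \<Rightarrow> nat set \<Rightarrow> nat set" where
  "beta_legs l C = (\<lambda>c. l - 1 - c) ` ({0..<l} - C)"

lemma beta_arms_iff: "x \<in> beta_arms l C \<longleftrightarrow> x + l \<in> C"
  unfolding beta_arms_def by (auto intro: rev_image_eqI[of "x + l"])

lemma beta_legs_iff: "y \<in> beta_legs l C \<longleftrightarrow> y < l \<and> l - 1 - y \<notin> C"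
  unfolding beta_legs_def by (auto intro: rev_image_eqI[of "l - 1 - y"])

lemma finite_beta_arms: "finite C \<Longrightarrow> finite (beta_arms l C)"
  unfolding beta_arms_def by simp

lemma finite_beta_legs: "finite (beta_legs l C)"
  unfolding beta_legs_def by simp

lemma minus_one_power_eq_of_add:
  assumes "x + y = n"
  shows "(-1 :: int) ^ x = (-1) ^ (n + y)"
proof -
  have "n + y = x + 2 * y" using assms by simp
  then show ?thesis by (simp add: power_add power_mult)
qed

lemma card_between_add_card_gaps:
  "card {y\<in>C. a < y \<and> y < b} + card {y. a < y \<and> y < b \<and> y \<notin> C} = b - a - 1"
proof -
  have "b - a - 1 = card {a<..<b}" by simp
  also have "\<dots> = card ({y\<in>C. a < y \<and> y < b} \<union> {y. a < y \<and> y < b \<and> y \<notin> C})"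
    by (rule arg_cong[where f = card]) auto
  also have "\<dots> = card {y\<in>C. a < y \<and> y < b} + card {y. a < y \<and> y < b \<and> y \<notin> C}"
    by (rule card_Un_disjoint) auto
  finally show ?thesis by simp
qed

lemma card_beta_arms_filter: "card {x\<in>beta_arms l C. P x} = card {c\<in>C. l \<le> c \<and> P (c - l)}"
proof -
  have "{x\<in>beta_arms l C. P x} = (\<lambda>c. c - l) ` {c\<in>C. l \<le> c \<and> P (c - l)}"
    unfolding beta_arms_def by auto
  moreover have "inj_on (\<lambda>c. c - l) {c\<in>C. l \<le> c \<and> P (c - l)}" by (auto simp: inj_on_def)
  ultimately show ?thesis by (simp add: card_image)
qed

lemma card_beta_legs_filter: "card {y\<in>beta_legs l C. P y} = card {c. c < l \<and> c \<notin> C \<and> P (l - 1 - c)}"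
proof -
  have "{y\<in>beta_legs l C. P y} = (\<lambda>c. l - 1 - c) ` {c. c < l \<and> c \<notin> C \<and> P (l - 1 - c)}"
    unfolding beta_legs_def by auto
  moreover have "inj_on (\<lambda>c. l - 1 - c) {c. c < l \<and> c \<notin> C \<and> P (l - 1 - c)}" by (auto simp: inj_on_def)
  ultimately show ?thesis by (simp add: card_image)
qed

text \<open>Moving a bead from \<open>c\<close> to \<open>c - m\<close> in the beta-set, seen in Frobenius coordinates:
  above \<open>l\<close> it shortens an arm, below \<open>l\<close> it lengthens a leg, and across \<open>l\<close> it removes
  a whole hook of size \<open>m\<close>.\<close>

lemma sum_beta_moves_arm:
  fixes F :: "nat set \<Rightarrow> nat set \<Rightarrow> int"
  shows "(\<Sum>c\<in>{c\<in>C. (m \<le> c \<and> c - m \<notin> C) \<and> l + m \<le> c}.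
      (-1) ^ card {y\<in>C. c - m < y \<and> y < c} *
      F (beta_arms l (insert (c - m) (C - {c}))) (beta_legs l (insert (c - m) (C - {c})))) =
    (\<Sum>a\<in>{a\<in>beta_arms l C. m \<le> a \<and> a - m \<notin> beta_arms l C}.
      (-1) ^ card {x\<in>beta_arms l C. a - m < x \<and> x < a} * F (insert (a - m) (beta_arms l C - {a})) (beta_legs l C))"
proof (rule sum.reindex_bij_witness[where i = "\<lambda>a. a + l" and j = "\<lambda>c. c - l"])
  fix c assume "c \<in> {c\<in>C. (m \<le> c \<and> c - m \<notin> C) \<and> l + m \<le> c}"
  then have c: "c \<in> C" "c - m \<notin> C" "l + m \<le> c" by auto
  show "c - l + l = c" using c by simp
  show "c - l \<in> {a\<in>beta_arms l C. m \<le> a \<and> a - m \<notin> beta_arms l C}"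
    using c by (simp add: beta_arms_iff)
  have "card {x\<in>beta_arms l C. c - l - m < x \<and> x < c - l} = card {y\<in>C. c - m < y \<and> y < c}"
    unfolding card_beta_arms_filter using c by (intro arg_cong[where f = card]) auto
  moreover have "beta_arms l (insert (c - m) (C - {c})) = insert (c - l - m) (beta_arms l C - {c - l})"
    using c by (auto simp: beta_arms_iff)
  moreover have "beta_legs l (insert (c - m) (C - {c})) = beta_legs l C"
    using c by (auto simp: beta_legs_iff)
  ultimately show "(-1) ^ card {x\<in>beta_arms l C. c - l - m < x \<and> x < c - l} *
      F (insert (c - l - m) (beta_arms l C - {c - l})) (beta_legs l C) =
    (-1) ^ card {y\<in>C. c - m < y \<and> y < c} *
      F (beta_arms l (insert (c - m) (C - {c}))) (beta_legs l (insert (c - m) (C - {c})))"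
    by simp
next
  fix a assume "a \<in> {a\<in>beta_arms l C. m \<le> a \<and> a - m \<notin> beta_arms l C}"
  then show "a + l - l = a" "a + l \<in> {c\<in>C. (m \<le> c \<and> c - m \<notin> C) \<and> l + m \<le> c}"
    by (auto simp: beta_arms_iff)
qed

lemma sum_beta_moves_leg:
  fixes F :: "nat set \<Rightarrow> nat set \<Rightarrow> int"
  assumes "0 < m"
  shows "(\<Sum>c\<in>{c\<in>C. (m \<le> c \<and> c - m \<notin> C) \<and> c < l}.
      (-1) ^ card {y\<in>C. c - m < y \<and> y < c} *
      F (beta_arms l (insert (c - m) (C - {c}))) (beta_legs l (insert (c - m) (C - {c})))) =
    (\<Sum>b\<in>{b\<in>beta_legs l C. m \<le> b \<and> b - m \<notin> beta_legs l C}.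
      (-1) ^ (m + 1 + card {y\<in>beta_legs l C. b - m < y \<and> y < b}) *
      F (beta_arms l C) (insert (b - m) (beta_legs l C - {b})))"
proof (rule sum.reindex_bij_witness[where i = "\<lambda>b. l - 1 - b + m" and j = "\<lambda>c. l - 1 - (c - m)"])
  fix c assume "c \<in> {c\<in>C. (m \<le> c \<and> c - m \<notin> C) \<and> c < l}"
  then have c: "c \<in> C" "m \<le> c" "c - m \<notin> C" "c < l" by auto
  show "l - 1 - (l - 1 - (c - m)) + m = c" using c by simp
  show "l - 1 - (c - m) \<in> {b\<in>beta_legs l C. m \<le> b \<and> b - m \<notin> beta_legs l C}"
    using c by (auto simp: beta_legs_iff)
  define K where "K = card {y\<in>beta_legs l C. l - 1 - (c - m) - m < y \<and> y < l - 1 - (c - m)}"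
  have "K = card {y. c - m < y \<and> y < c \<and> y \<notin> C}"
    unfolding K_def card_beta_legs_filter using c by (intro arg_cong[where f = card]) auto
  then have "card {y\<in>C. c - m < y \<and> y < c} + (K + 1) = m"
    using card_between_add_card_gaps[of C "c - m" c] c assms by simp
  then have "(-1 :: int) ^ card {y\<in>C. c - m < y \<and> y < c} = (-1) ^ (m + (K + 1))"
    by (rule minus_one_power_eq_of_add)
  then have "(-1 :: int) ^ card {y\<in>C. c - m < y \<and> y < c} = (-1) ^ (m + 1 + K)"
    by (simp only: ac_simps)
  moreover have "beta_arms l (insert (c - m) (C - {c})) = beta_arms l C"
    using c by (auto simp: beta_arms_iff)
  moreover have "beta_legs l (insert (c - m) (C - {c})) =
      insert (l - 1 - (c - m) - m) (beta_legs l C - {l - 1 - (c - m)})"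
    using c by (auto simp: beta_legs_iff)
  ultimately show "(-1) ^ (m + 1 + card {y\<in>beta_legs l C. l - 1 - (c - m) - m < y \<and> y < l - 1 - (c - m)}) *
      F (beta_arms l C) (insert (l - 1 - (c - m) - m) (beta_legs l C - {l - 1 - (c - m)})) =
    (-1) ^ card {y\<in>C. c - m < y \<and> y < c} *
      F (beta_arms l (insert (c - m) (C - {c}))) (beta_legs l (insert (c - m) (C - {c})))"
    by (simp add: K_def)
next
  fix b assume "b \<in> {b\<in>beta_legs l C. m \<le> b \<and> b - m \<notin> beta_legs l C}"
  then show "l - 1 - (l - 1 - b + m - m) = b" "l - 1 - b + m \<in> {c\<in>C. (m \<le> c \<and> c - m \<notin> C) \<and> c < l}"
    by (auto simp: beta_legs_iff)
qed

lemma sum_beta_moves_hook: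
  fixes F :: "nat set \<Rightarrow> nat set \<Rightarrow> int"
  shows "(\<Sum>c\<in>{c\<in>C. (m \<le> c \<and> c - m \<notin> C) \<and> l \<le> c \<and> c < l + m}.
      (-1) ^ card {y\<in>C. c - m < y \<and> y < c} *
      F (beta_arms l (insert (c - m) (C - {c}))) (beta_legs l (insert (c - m) (C - {c})))) =
    (\<Sum>a\<in>{a\<in>beta_arms l C. a < m \<and> m - 1 - a \<in> beta_legs l C}.
      (-1) ^ (card {x\<in>beta_arms l C. x < a} + card {y\<in>beta_legs l C. y < m - 1 - a} + (m - 1 - a)) *
      F (beta_arms l C - {a}) (beta_legs l C - {m - 1 - a}))"
proof (rule sum.reindex_bij_witness[where i = "\<lambda>a. a + l" and j = "\<lambda>c. c - l"])
  fix c assume "c \<in> {c\<in>C. (m \<le> c \<and> c - m \<notin> C) \<and> l \<le> c \<and> c < l + m}"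
  then have c: "c \<in> C" "m \<le> c" "c - m \<notin> C" "l \<le> c" "c < l + m" by auto
  define b where "b = m - 1 - (c - l)"
  show "c - l + l = c" using c by simp
  show "c - l \<in> {a\<in>beta_arms l C. a < m \<and> m - 1 - a \<in> beta_legs l C}"
    using c by (auto simp: beta_arms_iff beta_legs_iff)
  have "card {y\<in>C. c - m < y \<and> y < c} = card {y\<in>C. l \<le> y \<and> y < c} + card {y\<in>C. c - m < y \<and> y < l}"
    using c by (subst card_Un_disjoint[symmetric]) (auto intro: arg_cong[where f = card])
  moreover have "card {x\<in>beta_arms l C. x < c - l} = card {y\<in>C. l \<le> y \<and> y < c}"
    unfolding card_beta_arms_filter using c by (intro arg_cong[where f = card]) auto
  moreover have "card {y\<in>beta_legs l C. y < b} = card {y. c - m < y \<and> y < l \<and> y \<notin> C}"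
    unfolding card_beta_legs_filter b_def using c by (intro arg_cong[where f = card]) auto
  moreover have "(-1 :: int) ^ card {y\<in>C. c - m < y \<and> y < l} = (-1) ^ (b + card {y. c - m < y \<and> y < l \<and> y \<notin> C})"
    using card_between_add_card_gaps[of C "c - m" l] c
    by (intro minus_one_power_eq_of_add) (simp add: b_def)
  ultimately have "(-1 :: int) ^ card {y\<in>C. c - m < y \<and> y < c} =
      (-1) ^ (card {x\<in>beta_arms l C. x < c - l} + card {y\<in>beta_legs l C. y < b} + b)"
    by (simp add: power_add ac_simps)
  moreover have "beta_arms l (insert (c - m) (C - {c})) = beta_arms l C - {c - l}"
    using c by (auto simp: beta_arms_iff)
  moreover have "beta_legs l (insert (c - m) (C - {c})) = beta_legs l C - {b}"
    using c by (auto simp: beta_legs_iff b_def)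
  ultimately show "(-1) ^ (card {x\<in>beta_arms l C. x < c - l} + card {y\<in>beta_legs l C. y < m - 1 - (c - l)} +
      (m - 1 - (c - l))) * F (beta_arms l C - {c - l}) (beta_legs l C - {m - 1 - (c - l)}) =
    (-1) ^ card {y\<in>C. c - m < y \<and> y < c} *
      F (beta_arms l (insert (c - m) (C - {c}))) (beta_legs l (insert (c - m) (C - {c})))"
    by (simp add: b_def)
next
  fix a assume "a \<in> {a\<in>beta_arms l C. a < m \<and> m - 1 - a \<in> beta_legs l C}"
  then show "a + l - l = a" "a + l \<in> {c\<in>C. (m \<le> c \<and> c - m \<notin> C) \<and> l \<le> c \<and> c < l + m}"
    by (auto simp: beta_arms_iff beta_legs_iff add.commute)
qed

lemma sum_beta_moves:
  fixes F :: "nat set \<Rightarrow> nat set \<Rightarrow> int"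
  assumes C: "finite C" and m: "0 < m"
  shows "(\<Sum>c\<in>{c\<in>C. m \<le> c \<and> c - m \<notin> C}. (-1) ^ card {y\<in>C. c - m < y \<and> y < c} *
      F (beta_arms l (insert (c - m) (C - {c}))) (beta_legs l (insert (c - m) (C - {c})))) =
    (\<Sum>a\<in>{a\<in>beta_arms l C. m \<le> a \<and> a - m \<notin> beta_arms l C}.
      (-1) ^ card {x\<in>beta_arms l C. a - m < x \<and> x < a} * F (insert (a - m) (beta_arms l C - {a})) (beta_legs l C)) +
    (\<Sum>b\<in>{b\<in>beta_legs l C. m \<le> b \<and> b - m \<notin> beta_legs l C}.
      (-1) ^ (m + 1 + card {y\<in>beta_legs l C. b - m < y \<and> y < b}) *
      F (beta_arms l C) (insert (b - m) (beta_legs l C - {b}))) +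
    (\<Sum>a\<in>{a\<in>beta_arms l C. a < m \<and> m - 1 - a \<in> beta_legs l C}.
      (-1) ^ (card {x\<in>beta_arms l C. x < a} + card {y\<in>beta_legs l C. y < m - 1 - a} + (m - 1 - a)) *
      F (beta_arms l C - {a}) (beta_legs l C - {m - 1 - a}))"
proof -
  define t where "t c = (-1) ^ card {y\<in>C. c - m < y \<and> y < c} *
      F (beta_arms l (insert (c - m) (C - {c}))) (beta_legs l (insert (c - m) (C - {c})))" for c
  define S where "S P = {c\<in>C. (m \<le> c \<and> c - m \<notin> C) \<and> P c}" for P
  have "{c\<in>C. m \<le> c \<and> c - m \<notin> C} = (S (\<lambda>c. l + m \<le> c) \<union> S (\<lambda>c. c < l)) \<union> S (\<lambda>c. l \<le> c \<and> c < l + m)"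
    by (auto simp: S_def)
  then have "sum t {c\<in>C. m \<le> c \<and> c - m \<notin> C} =
      sum t (S (\<lambda>c. l + m \<le> c)) + sum t (S (\<lambda>c. c < l)) + sum t (S (\<lambda>c. l \<le> c \<and> c < l + m))"
    using C by (simp add: S_def sum.union_disjoint disjoint_iff)
  then show ?thesis
    unfolding t_def S_def sum_beta_moves_arm sum_beta_moves_leg[OF m] sum_beta_moves_hook .
qed

lemma fs_sum_Nil: "fs_sum A B [] = (if A = {} \<and> B = {} then 1 else 0)"
proof -
  have "T \<in> fstructs [] \<longleftrightarrow> T = ([], [])" for T
    by (cases T) (simp add: fstructs_def filled_structure_def)
  then have "fstructs [] = {([], [])}" by blast
  moreover have "hooks ([], []) = {}" by (simp add: hooks_def)
  moreover have "sgnT ([], []) = 1" by (simp add: sgnT_def hooks_def n_vertical_def)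
  moreover have "bij_betw f {} X \<longleftrightarrow> X = {}" for f :: "nat \<Rightarrow> nat" and X
    by (auto simp: bij_betw_def)
  ultimately show ?thesis by (simp add: fs_sum_def fs_term_def)
qed

lemma beta_staircase_iff:
  assumes v: "strict_antimono_on {0..<l} v"
  shows "(\<forall>j<l. v j = l - 1 - j) \<longleftrightarrow> beta_arms l (v ` {0..<l}) = {} \<and> beta_legs l (v ` {0..<l}) = {}"
proof
  assume h: "\<forall>j<l. v j = l - 1 - j"
  have "v ` {0..<l} = {0..<l}"
  proof
    show "v ` {0..<l} \<subseteq> {0..<l}" using h by auto
    show "{0..<l} \<subseteq> v ` {0..<l}"
    proof
      fix x assume "x \<in> {0..<l}"
      then show "x \<in> v ` {0..<l}" using h by (intro rev_image_eqI[of "l - 1 - x"]) auto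
    qed
  qed
  then show "beta_arms l (v ` {0..<l}) = {} \<and> beta_legs l (v ` {0..<l}) = {}"
    by (auto simp: beta_arms_iff beta_legs_iff)
next
  assume h: "beta_arms l (v ` {0..<l}) = {} \<and> beta_legs l (v ` {0..<l}) = {}"
  have "v j < l" if "j < l" for j
  proof (rule ccontr)
    assume "\<not> v j < l"
    then have "v j - l \<in> beta_arms l (v ` {0..<l})" using that by (simp add: beta_arms_iff)
    then show False using h by simp
  qed
  then show "\<forall>j<l. v j = l - 1 - j" using strict_antimono_on_staircase[OF v] by blast
qed

theorem alt_psum_coeff_eq_fs_sum:
  assumes "\<forall>x\<in>set ms. 0 < x" "strict_antimono_on {0..<l} v"
  shows "alt_psum_coeff l v ms = fs_sum (beta_arms l (v ` {0..<l})) (beta_legs l (v ` {0..<l})) (rev ms)"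
  using assms
proof (induction ms arbitrary: v)
  case Nil
  then show ?case
    using alt_psum_coeff_Nil_strict_antimono beta_staircase_iff fs_sum_Nil by simp
next
  case (Cons m ms)
  define C where "C = v ` {0..<l}"
  have m: "0 < m" using Cons.prems(1) by simp
  have C: "finite C" unfolding C_def by simp
  have "alt_psum_coeff l v (m # ms) = (\<Sum>c\<in>{c\<in>C. m \<le> c \<and> c - m \<notin> C}.
      (-1) ^ card {y\<in>C. c - m < y \<and> y < c} *
      fs_sum (beta_arms l (insert (c - m) (C - {c}))) (beta_legs l (insert (c - m) (C - {c}))) (rev ms))"
    unfolding C_def using Cons by (intro alt_psum_coeff_Cons_strict_antimono) simp_all
  also have "\<dots> = fs_sum (beta_arms l C) (beta_legs l C) (rev ms @ [m])"
    unfolding sum_beta_moves[OF C m, where F = "\<lambda>A B. fs_sum A B (rev ms)"]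
      fs_sum_snoc[OF m finite_beta_arms[OF C] finite_beta_legs] ..
  finally show ?case by (simp add: C_def)
qed

section \<open>Young diagrams\<close>

definition beta_numbers :: "nat list \<Rightarrow> nat \<Rightarrow> nat" where
  "beta_numbers lam j = lam ! j + (length lam - 1 - j)"

lemma sn_char_eq_frobenius_sum: "sn_char lam rho = frobenius_sum (length lam) (beta_numbers lam) rho"
  unfolding sn_char_def frobenius_sum_def beta_numbers_def Let_def by simp

lemma young_diagram_nth_mono:
  assumes "young_diagram lam" "i \<le> j" "j < length lam"
  shows "lam ! j \<le> lam ! i"
  using assms sorted_rev_nth_mono[of lam i j] by (simp add: young_diagram_def)

lemma strict_antimono_beta_numbers:
  assumes "young_diagram lam"
  shows "strict_antimono_on {0..<length lam} (beta_numbers lam)"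
proof (rule monotone_onI)
  fix i i' assume "i \<in> {0..<length lam}" "i' \<in> {0..<length lam}" "i < i'"
  then show "beta_numbers lam i' < beta_numbers lam i"
    using young_diagram_nth_mono[OF assms, of i i'] by (simp add: beta_numbers_def)
qed

lemma young_diagram_less_length_filter_iff:
  assumes yd: "young_diagram lam" and j: "j < length lam"
  shows "j < length (filter (\<lambda>x. t \<le> x) lam) \<longleftrightarrow> t \<le> lam ! j"
proof -
  define S where "S = {i. i < length lam \<and> t \<le> lam ! i}"
  have S: "S = {..<card S}"
  proof (rule down_closed_eq_lessThan)
    fix i i' assume "i \<le> i'" "i' \<in> S"
    then show "i \<in> S" using young_diagram_nth_mono[OF yd, of i i'] by (auto simp: S_def)
  qed (simp add: S_def)
  moreover have "length (filter (\<lambda>x. t \<le> x) lam) = card S"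
    unfolding S_def by (rule length_filter_conv_card)
  moreover have "j \<in> S \<longleftrightarrow> j < card S" by (subst S) simp
  ultimately show ?thesis using j by (simp add: S_def)
qed

lemma young_diagram_diag_eq:
  assumes yd: "young_diagram lam"
  shows "{i. i < length lam \<and> Suc i \<le> lam ! i} = {..<diag lam}"
  unfolding diag_def
proof (rule down_closed_eq_lessThan)
  fix i i' assume "i \<le> i'" "i' \<in> {i. i < length lam \<and> Suc i \<le> lam ! i}"
  then show "i \<in> {i. i < length lam \<and> Suc i \<le> lam ! i}"
    using young_diagram_nth_mono[OF yd, of i i'] by auto
qed simp

lemma beta_arms_eq_frob_p:
  assumes yd: "young_diagram lam"
  shows "beta_arms (length lam) (beta_numbers lam ` {0..<length lam}) = set (frob_p lam)"
proof -
  have "x + length lam \<in> beta_numbers lam ` {0..<length lam} \<longleftrightarrow>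
      (\<exists>j\<in>{i. i < length lam \<and> Suc i \<le> lam ! i}. x = lam ! j - Suc j)" for x
    by (auto simp: beta_numbers_def image_iff)
  then show ?thesis
    unfolding young_diagram_diag_eq[OF yd] by (auto simp: beta_arms_iff frob_p_def)
qed

lemma conj_len_Suc_mono: "conj_len lam (Suc (Suc i)) \<le> conj_len lam (Suc i)"
  unfolding conj_len_def by (induction lam) auto

lemma distinct_frob_p:
  assumes yd: "young_diagram lam"
  shows "distinct (frob_p lam)"
proof -
  have "strict_antimono_on {0..<diag lam} (\<lambda>i. lam ! i - Suc i)"
  proof (rule strict_antimono_on_SucI)
    fix i assume "Suc i < diag lam"
    then have "Suc i < length lam" "Suc (Suc i) \<le> lam ! Suc i"
      using young_diagram_diag_eq[OF yd] by auto
    then show "lam ! Suc i - Suc (Suc i) < lam ! i - Suc i"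
      using young_diagram_nth_mono[OF yd, of i "Suc i"] by simp
  qed
  then show ?thesis
    unfolding frob_p_def by (simp add: distinct_map strict_antimono_on_imp_inj_on)
qed

lemma distinct_frob_q:
  assumes yd: "young_diagram lam"
  shows "distinct (frob_q lam)"
proof -
  have "strict_antimono_on {0..<diag lam} (\<lambda>i. conj_len lam (Suc i) - Suc i)"
  proof (rule strict_antimono_on_SucI)
    fix i assume "Suc i < diag lam"
    then have "Suc i < length lam" "Suc (Suc i) \<le> lam ! Suc i"
      using young_diagram_diag_eq[OF yd] by auto
    then have "Suc i < conj_len lam (Suc (Suc i))"
      using young_diagram_less_length_filter_iff[OF yd] by (simp add: conj_len_def)
    then show "conj_len lam (Suc (Suc i)) - Suc (Suc i) < conj_len lam (Suc i) - Suc i"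
      using conj_len_Suc_mono[of lam i] by simp
  qed
  then show ?thesis
    unfolding frob_q_def by (simp add: distinct_map strict_antimono_on_imp_inj_on)
qed

lemma card_beta_legs_eq_card_beta_arms:
  assumes "finite C" "card C = l"
  shows "card (beta_legs l C) = card (beta_arms l C)"
proof -
  have "card (beta_arms l C) = card {c\<in>C. l \<le> c}"
    unfolding beta_arms_def by (rule card_image) (auto simp: inj_on_def)
  moreover have "card (beta_legs l C) = card ({0..<l} - C)"
    unfolding beta_legs_def by (rule card_image) (auto simp: inj_on_def)
  moreover have "card ({0..<l} - C) = l - card {c\<in>C. c < l}"
  proof -
    have "{0..<l} \<inter> C = {c\<in>C. c < l}" by auto
    then show ?thesis by (simp add: card_Diff_subset_Int)
  qed
  moreover have "card C = card {c\<in>C. l \<le> c} + card {c\<in>C. c < l}"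
    using assms(1) by (subst card_Un_disjoint[symmetric]) (auto intro: arg_cong[where f = card])
  ultimately show ?thesis using assms(2) by simp
qed

lemma frob_q_subset_beta_legs:
  assumes yd: "young_diagram lam"
  shows "set (frob_q lam) \<subseteq> beta_legs (length lam) (beta_numbers lam ` {0..<length lam})"
proof
  define l where "l = length lam"
  fix y assume "y \<in> set (frob_q lam)"
  then obtain i where i: "i < diag lam" "y = conj_len lam (Suc i) - Suc i" unfolding frob_q_def by auto
  define L where "L = conj_len lam (Suc i)"
  have ii: "i < l" "Suc i \<le> lam ! i" using young_diagram_diag_eq[OF yd] i(1) by (auto simp: l_def)
  have L: "j < L \<longleftrightarrow> Suc i \<le> lam ! j" if "j < l" for j
    using young_diagram_less_length_filter_iff[OF yd] that unfolding L_def conj_len_def l_def by simp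
  have iL: "Suc i \<le> L" using L[of i] ii by simp
  have Ll: "L \<le> l" unfolding L_def conj_len_def l_def by simp
  have notin: "beta_numbers lam j \<noteq> l - 1 - y" if "j < l" for j
    using L[OF that] that iL Ll i(2) unfolding beta_numbers_def L_def[symmetric] l_def[symmetric]
    by (cases "Suc i \<le> lam ! j") linarith+
  have "l - 1 - y \<notin> beta_numbers lam ` {0..<l}"
  proof
    assume "l - 1 - y \<in> beta_numbers lam ` {0..<l}"
    then obtain j where "j < l" "l - 1 - y = beta_numbers lam j" by auto
    then show False using notin by metis
  qed
  moreover have "y < l" using i(2) iL Ll unfolding L_def[symmetric] by linarith
  ultimately show "y \<in> beta_legs (length lam) (beta_numbers lam ` {0..<length lam})"
    by (simp add: beta_legs_iff l_def)
qed

lemma beta_legs_eq_frob_q: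
  assumes yd: "young_diagram lam"
  shows "beta_legs (length lam) (beta_numbers lam ` {0..<length lam}) = set (frob_q lam)"
proof -
  define C where "C = beta_numbers lam ` {0..<length lam}"
  have "card C = length lam"
    unfolding C_def using strict_antimono_on_imp_inj_on[OF strict_antimono_beta_numbers[OF yd]]
    by (simp add: card_image)
  then have "card (beta_legs (length lam) C) = card (set (frob_p lam))"
    using card_beta_legs_eq_card_beta_arms[of C] beta_arms_eq_frob_p[OF yd] by (simp add: C_def)
  also have "\<dots> = card (set (frob_q lam))"
    using distinct_card[OF distinct_frob_p[OF yd]] distinct_card[OF distinct_frob_q[OF yd]]
    by (simp add: frob_p_def frob_q_def)
  finally show ?thesis
    using frob_q_subset_beta_legs[OF yd] finite_beta_legs unfolding C_def
    by (intro card_subset_eq[symmetric]) auto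
qed

lemma image_mset_mset_set_eq_mset_iff:
  assumes "distinct xs" "finite H"
  shows "image_mset f (mset_set H) = mset xs \<longleftrightarrow> bij_betw f H (set xs)"
proof
  assume h: "image_mset f (mset_set H) = mset xs"
  then have "f ` H = set xs"
    using assms(2) by (metis finite_set_mset_mset_set set_image_mset set_mset_mset)
  moreover have "card H = card (set xs)"
    using h assms(1) by (metis distinct_card size_image_mset size_mset size_mset_set)
  ultimately show "bij_betw f H (set xs)"
    using assms(2) by (simp add: bij_betw_def inj_on_iff_eq_card)
next
  assume "bij_betw f H (set xs)"
  then show "image_mset f (mset_set H) = mset xs"
    using image_mset_mset_set[of f H] mset_set_set[OF assms(1)] by (simp add: bij_betw_def)
qed

theorem theorem1p2p1:
  fixes lam rho :: "nat list"
  assumes "young_diagram lam"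
    and "\<forall>x\<in>set rho. 0 < x"
    and "sum_list rho = sum_list lam"
  shows "sn_char lam rho =
    (\<Sum>T \<in> {T. filled_structure (length rho) T \<and> map bcard (snd T) = rho \<and>
               image_mset (fillP T) (mset_set (hooks T)) = mset (frob_p lam) \<and>
               image_mset (fillQ T) (mset_set (hooks T)) = mset (frob_q lam)}.
       sgnT T)"
proof -
  define C where "C = beta_numbers lam ` {0..<length lam}"
  have "sn_char lam rho = alt_psum_coeff (length lam) (beta_numbers lam) (rev rho)"
    by (simp add: sn_char_eq_frobenius_sum frobenius_sum_eq_alt_psum_coeff)
  also have "\<dots> = fs_sum (beta_arms (length lam) C) (beta_legs (length lam) C) rho"
    unfolding C_def using assms(2) strict_antimono_beta_numbers[OF assms(1)]
    by (subst alt_psum_coeff_eq_fs_sum) simp_all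
  also have "\<dots> = fs_sum (set (frob_p lam)) (set (frob_q lam)) rho"
    unfolding C_def beta_arms_eq_frob_p[OF assms(1)] beta_legs_eq_frob_q[OF assms(1)] ..
  also have "\<dots> = (\<Sum>T \<in> {T. filled_structure (length rho) T \<and> map bcard (snd T) = rho \<and>
               image_mset (fillP T) (mset_set (hooks T)) = mset (frob_p lam) \<and>
               image_mset (fillQ T) (mset_set (hooks T)) = mset (frob_q lam)}. sgnT T)"
    unfolding fs_sum_def fs_term_def
      image_mset_mset_set_eq_mset_iff[OF distinct_frob_p[OF assms(1)] finite_hooks]
      image_mset_mset_set_eq_mset_iff[OF distinct_frob_q[OF assms(1)] finite_hooks]
    by (subst sum.inter_filter[OF finite_fstructs, symmetric]) (simp add: fstructs_def conj_assoc)
  finally show ?thesis .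
qed

end
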